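(* The class of ParalESN models with the Echo State Property, endowed with an MLP readout, is universal in the family of causal, time-invariant filters with the fading memory property: for any such filter $\mathcal{U}$ (on uniformly bounded input sequences) and any $\epsilon > 0$, there exists a ParalESN with diagonal transition matrix $\bar\Lambda_{\mathrm{h}}$ satisfying $|\lambda_i|<1$ for all diagonal entries and an MLP readout $f_{\mathrm{out}}$ whose induced filter $\mathcal{U}_{\mathrm{ParalESN}}$ satisfies $\sup_{\overleftarrow{x}} \|\mathcal{U}(\overleftarrow{x}) - \mathcal{U}_{\mathrm{ParalESN}}(\overleftarrow{x})\|_\infty < \epsilon$, the supremum being over the admissible (uniformly bounded) input sequences.
   Context: ParalESN: state recurrence $h_t = \bar{\Lambda}_{\mathrm{h}} h_{t-1} + \tau(W_{\mathrm{in}} x_t + b)$ with $\bar{\Lambda}_{\mathrm{h}}=\mathrm{diag}(\lambda_1,\dots,\lambda_{N_{\mathrm{h}}})\in\mathbb{C}^{N_{\mathrm{h}}\times N_{\mathrm{h}}}$, $W_{\mathrm{in}}\in\mathbb{C}^{N_{\mathrm{h}}\times N_{\mathrm{in}}}$, $b\in\mathbb{C}^{N_{\mathrm{h}}}$, $\tau\in(0,1]$, and output $y_t = f_{\mathrm{out}}(h_t)$ with $f_{\mathrm{out}}$ an MLP. The Echo State Property (ESP): for every input sequence and every two initial states, the resulting state sequences satisfy $\|h_t-h'_t\|_2\to 0$; when it holds, the system defines a filter mapping semi-infinite input sequences $(x_i)_{i\in\mathbb{Z}_-}$ to output sequences $(y_i)_{i\in\mathbb{Z}_-}$. A filter $\mathcal{U}:(\mathbb{R}^{N_x})^{\mathbb{Z}_-}\to(\mathbb{R}^{N_y})^{\mathbb{Z}_-}$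 is causal if $\mathcal{U}(\overleftarrow{x})_t$ depends only on $(x_s)_{s\le t}$; it is time-invariant if it commutes with every time shift $\mathcal{T}_\tau(\overleftarrow{x})_t = x_{t-\tau}$, $\tau>0$. For a weighting sequence $w\in(0,1]^{\mathbb{Z}_-}$ with $w_i\to 0$ as $i\to-\infty$, the weighted norm is $\|\overleftarrow{v}\|_w = \sup_{i\in\mathbb{Z}_-} w_{-i}\|v_i\|$ (i.e. the sup-norm of $w\odot\overleftarrow v$); $\|\overleftarrow v\|_\infty=\sup_i\|v_i\|$. $\mathcal{U}$ has the fading memory property if it is continuous with respect to the metric induced by $\|\cdot\|_w$ for some such weighting sequence: for every $\overleftarrow{x}_1$ and $\epsilon>0$ there is $\delta>0$ with $\|\overleftarrow{x}_1-\overleftarrow{x}_2\|_w<\delta \Rightarrow \|\mathcal{U}(\overleftarrow{x}_1)-\mathcal{U}(\overleftarrow{x}_2)\|_w<\epsilon$. *)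

theory Defs
  imports "HOL-Analysis.Analysis"
begin

text \<open>A semi-infinite sequence indexed by Z_- is represented as a function
  on nat: v k stands for v_{-k}. The time shift T_tau (v)_t = v_{t-tau} becomes
  (T_tau v) k = v (k + tau).
  ParalESN states live in C^N, represented as nat => complex (entries i >= N are 0).\<close>

definition bounded_seqs :: "real \<Rightarrow> (nat \<Rightarrow> 'a::real_normed_vector) set" where
  "bounded_seqs M = {x. \<forall>k. norm (x k) \<le> M}"

definition shift_seq :: "nat \<Rightarrow> (nat \<Rightarrow> 'a) \<Rightarrow> (nat \<Rightarrow> 'a)" where
  "shift_seq tau v = (\<lambda>k. v (k + tau))"

definition causal_filter ::
  "real \<Rightarrow> ((nat \<Rightarrow> 'a::real_normed_vector) \<Rightarrow> (nat \<Rightarrow> 'b)) \<Rightarrow> bool" where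
  "causal_filter M U \<longleftrightarrow>
     (\<forall>x\<in>bounded_seqs M. \<forall>y\<in>bounded_seqs M. \<forall>k.
        (\<forall>j\<ge>k. x j = y j) \<longrightarrow> U x k = U y k)"

definition time_invariant_filter ::
  "real \<Rightarrow> ((nat \<Rightarrow> 'a::real_normed_vector) \<Rightarrow> (nat \<Rightarrow> 'b)) \<Rightarrow> bool" where
  "time_invariant_filter M U \<longleftrightarrow>
     (\<forall>x\<in>bounded_seqs M. \<forall>tau>0. U (shift_seq tau x) = shift_seq tau (U x))"

definition weighting_seq :: "(nat \<Rightarrow> real) \<Rightarrow> bool" where
  "weighting_seq w \<longleftrightarrow> (\<forall>k. 0 < w k \<and> w k \<le> 1) \<and> w \<longlonglongrightarrow> 0"

definition wnorm :: "(nat \<Rightarrow> real) \<Rightarrow> (nat \<Rightarrow> 'a::real_normed_vector) \<Rightarrow> ereal" where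
  "wnorm w v = (SUP k. ereal (w k * norm (v k)))"

definition supnorm :: "(nat \<Rightarrow> 'a::real_normed_vector) \<Rightarrow> ereal" where
  "supnorm v = (SUP k. ereal (norm (v k)))"

definition fading_memory ::
  "real \<Rightarrow> ((nat \<Rightarrow> 'a::real_normed_vector) \<Rightarrow> (nat \<Rightarrow> 'b::real_normed_vector)) \<Rightarrow> bool" where
  "fading_memory M U \<longleftrightarrow>
     (\<exists>w. weighting_seq w \<and>
        (\<forall>x1\<in>bounded_seqs M. \<forall>e>0. \<exists>d>0. \<forall>x2\<in>bounded_seqs M.
            wnorm w (\<lambda>k. x1 k - x2 k) < ereal d \<longrightarrow>
            wnorm w (\<lambda>k. U x1 k - U x2 k) < ereal e))"

definition cnorm2 :: "nat \<Rightarrow> (nat \<Rightarrow> complex) \<Rightarrow> real" where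
  "cnorm2 N h = sqrt (\<Sum>i<N. (cmod (h i))\<^sup>2)"

definition esn_drive ::
  "nat \<Rightarrow> (nat \<Rightarrow> 'm::finite \<Rightarrow> complex) \<Rightarrow> (nat \<Rightarrow> complex) \<Rightarrow> real \<Rightarrow> real^'m \<Rightarrow> nat \<Rightarrow> complex" where
  "esn_drive N Win b tau u = (\<lambda>i. if i < N then
       complex_of_real tau * ((\<Sum>j\<in>UNIV. Win i j * complex_of_real (u $ j)) + b i) else 0)"

fun esn_traj ::
  "nat \<Rightarrow> (nat \<Rightarrow> complex) \<Rightarrow> (nat \<Rightarrow> 'm::finite \<Rightarrow> complex) \<Rightarrow> (nat \<Rightarrow> complex) \<Rightarrow> real
   \<Rightarrow> (nat \<Rightarrow> real^'m) \<Rightarrow> (nat \<Rightarrow> complex) \<Rightarrow> nat \<Rightarrow> (nat \<Rightarrow> complex)" where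
  "esn_traj N lam Win b tau x h0 0 = h0"
| "esn_traj N lam Win b tau x h0 (Suc t) =
     (\<lambda>i. (if i < N then lam i * esn_traj N lam Win b tau x h0 t i else 0)
          + esn_drive N Win b tau (x (Suc t)) i)"

definition echo_state_property ::
  "nat \<Rightarrow> (nat \<Rightarrow> complex) \<Rightarrow> (nat \<Rightarrow> 'm::finite \<Rightarrow> complex) \<Rightarrow> (nat \<Rightarrow> complex) \<Rightarrow> real \<Rightarrow> bool" where
  "echo_state_property N lam Win b tau \<longleftrightarrow>
     (\<forall>(x :: nat \<Rightarrow> real^'m) h0 h0'.
        (\<lambda>t. cnorm2 N (\<lambda>i. esn_traj N lam Win b tau x h0 t i - esn_traj N lam Win b tau x h0' t i))
          \<longlonglongrightarrow> 0)"

text \<open>State sequence on Z_- (k stands for time -k): h_{-k} = Lambda h_{-k-1} + tau (W_in x_{-k} + b).\<close>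
definition esn_solution ::
  "nat \<Rightarrow> (nat \<Rightarrow> complex) \<Rightarrow> (nat \<Rightarrow> 'm::finite \<Rightarrow> complex) \<Rightarrow> (nat \<Rightarrow> complex) \<Rightarrow> real
   \<Rightarrow> (nat \<Rightarrow> real^'m) \<Rightarrow> (nat \<Rightarrow> nat \<Rightarrow> complex) \<Rightarrow> bool" where
  "esn_solution N lam Win b tau x h \<longleftrightarrow>
     (\<forall>k i. h k i = (if i < N then lam i * h (Suc k) i else 0) + esn_drive N Win b tau (x k) i)
     \<and> (\<exists>B. \<forall>k. cnorm2 N (h k) \<le> B)"

text \<open>The state filter induced by the ESN: the (unique) bounded state sequence on Z_-.\<close>
definition esn_states ::
  "nat \<Rightarrow> (nat \<Rightarrow> complex) \<Rightarrow> (nat \<Rightarrow> 'm::finite \<Rightarrow> complex) \<Rightarrow> (nat \<Rightarrow> complex) \<Rightarrow> real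
   \<Rightarrow> (nat \<Rightarrow> real^'m) \<Rightarrow> (nat \<Rightarrow> nat \<Rightarrow> complex)" where
  "esn_states N lam Win b tau x = (THE h. esn_solution N lam Win b tau x h)"

definition realify :: "nat \<Rightarrow> (nat \<Rightarrow> complex) \<Rightarrow> (nat \<Rightarrow> real)" where
  "realify N h = (\<lambda>i. if i < N then Re (h i) else if i < 2 * N then Im (h (i - N)) else 0)"

fun mlp_hidden :: "(real \<Rightarrow> real) \<Rightarrow> (nat \<times> (nat \<Rightarrow> nat \<Rightarrow> real) \<times> (nat \<Rightarrow> real)) list
    \<Rightarrow> (nat \<Rightarrow> real) \<Rightarrow> (nat \<Rightarrow> real)" where
  "mlp_hidden \<sigma> [] v = v"
| "mlp_hidden \<sigma> ((d, W, c) # Ls) v = mlp_hidden \<sigma> Ls (\<lambda>j. \<sigma> ((\<Sum>i<d. W j i * v i) + c j))"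

definition is_mlp :: "(real \<Rightarrow> real) \<Rightarrow> ((nat \<Rightarrow> real) \<Rightarrow> real^'n) \<Rightarrow> bool" where
  "is_mlp \<sigma> f \<longleftrightarrow>
     (\<exists>Ls d (A :: 'n \<Rightarrow> nat \<Rightarrow> real) (c :: real^'n).
        f = (\<lambda>v. (\<chi> k. (\<Sum>i<d. A k i * mlp_hidden \<sigma> Ls v i)) + c))"

definition paral_filter ::
  "nat \<Rightarrow> (nat \<Rightarrow> complex) \<Rightarrow> (nat \<Rightarrow> 'm::finite \<Rightarrow> complex) \<Rightarrow> (nat \<Rightarrow> complex) \<Rightarrow> real
   \<Rightarrow> ((nat \<Rightarrow> real) \<Rightarrow> real^'n) \<Rightarrow> (nat \<Rightarrow> real^'m) \<Rightarrow> (nat \<Rightarrow> real^'n)" where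
  "paral_filter N lam Win b tau f x = (\<lambda>k. f (realify N (esn_states N lam Win b tau x k)))"

definition polynomial_fun :: "(real \<Rightarrow> real) \<Rightarrow> bool" where
  "polynomial_fun g \<longleftrightarrow> (\<exists>n a. \<forall>t. g t = (\<Sum>i\<le>n. a i * t ^ i))"

end

theory Submission
  imports Defs "HOL-Computational_Algebra.Polynomial"
begin

text \<open>The reservoir is chosen so that its states are the features
  \<open>x \<mapsto> \<Sum>l. x l $ j * \<lambda> ^ l\<close> for all rates \<open>\<lambda> = 1/(n+2)\<close> and input coordinates \<open>j\<close>: with
  \<open>|\<lambda>| < 1\<close> they are the unique bounded solution of the state recursion, and the Echo State
  Property holds. On the compact set of bounded input histories these features are continuous
  and separate points, because a power series with bounded coefficients that vanishes along
  \<open>\<lambda> = 1/(n+2) \<rightarrow> 0\<close> is zero. Fading memory makes \<open>x \<mapsto> U x 0\<close> continuous there, so by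
  Stone--Weierstrass it is uniformly close to a sum of exponentials of linear combinations of
  finitely many features. Because \<open>\<sigma>\<close> is continuous and not a polynomial, differentiating
  smoothed copies of \<open>\<sigma>(w t + b)\<close> in \<open>w\<close> shows that one-variable \<open>\<sigma>\<close>-networks approximate
  every monomial, hence \<open>exp\<close>, uniformly on compact intervals; so a one-hidden-layer MLP
  approximates \<open>U x 0\<close> from the features. Time invariance, \<open>U x k = U (shift_seq k x) 0\<close>,
  carries the bound from time \<open>0\<close> to all times.\<close>

section \<open>Shallow networks of one real variable\<close>

lemma sum_lessThan_add: "(\<Sum>i<m + n. f i) = (\<Sum>i<m. f i) + (\<Sum>i<n. f (m + i :: nat))"
  by (induction n) (simp_all add: add.assoc)

definition shallow_net :: "(real \<Rightarrow> real) \<Rightarrow> (real \<Rightarrow> real) \<Rightarrow> bool" where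
  "shallow_net \<sigma> \<phi> \<longleftrightarrow> (\<exists>(n::nat) a w b. \<forall>t. \<phi> t = (\<Sum>i<n. a i * \<sigma> (w i * t + b i)))"

lemma shallow_net_activation: "shallow_net \<sigma> (\<lambda>t. \<sigma> (w * t + b))"
  unfolding shallow_net_def
  by (intro exI[of _ 1] exI[of _ "\<lambda>_. 1"] exI[of _ "\<lambda>_. w"] exI[of _ "\<lambda>_. b"]) simp

lemma shallow_net_zero: "shallow_net \<sigma> (\<lambda>t. 0)"
  unfolding shallow_net_def by (intro exI[of _ 0]) simp

lemma shallow_net_add:
  assumes "shallow_net \<sigma> \<phi>" and "shallow_net \<sigma> \<psi>"
  shows "shallow_net \<sigma> (\<lambda>t. \<phi> t + \<psi> t)"
proof -
  obtain n1 :: nat and a1 w1 b1 where \<phi>: "\<And>t. \<phi> t = (\<Sum>i<n1. a1 i * \<sigma> (w1 i * t + b1 i))"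
    using assms(1) unfolding shallow_net_def by blast
  obtain n2 :: nat and a2 w2 b2 where \<psi>: "\<And>t. \<psi> t = (\<Sum>i<n2. a2 i * \<sigma> (w2 i * t + b2 i))"
    using assms(2) unfolding shallow_net_def by blast
  let ?join = "\<lambda>f g i. if i < n1 then f i else g (i - n1)"
  have repr: "\<phi> t + \<psi> t = (\<Sum>i<n1 + n2. ?join a1 a2 i * \<sigma> (?join w1 w2 i * t + ?join b1 b2 i))" for t
    by (simp add: \<phi> \<psi> sum_lessThan_add)
  then show ?thesis unfolding shallow_net_def by (intro exI allI) (rule repr)
qed

lemma shallow_net_cmult:
  assumes "shallow_net \<sigma> \<phi>" shows "shallow_net \<sigma> (\<lambda>t. c * \<phi> t)"
proof -
  obtain n :: nat and a w b where \<phi>: "\<And>t. \<phi> t = (\<Sum>i<n. a i * \<sigma> (w i * t + b i))"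
    using assms unfolding shallow_net_def by blast
  have repr: "c * \<phi> t = (\<Sum>i<n. (c * a i) * \<sigma> (w i * t + b i))" for t
    by (simp add: \<phi> sum_distrib_left mult.assoc)
  then show ?thesis unfolding shallow_net_def by (intro exI allI) (rule repr)
qed

lemma shallow_net_affine:
  assumes "shallow_net \<sigma> \<phi>" shows "shallow_net \<sigma> (\<lambda>t. \<phi> (\<alpha> * t + \<beta>))"
proof -
  obtain n :: nat and a w b where \<phi>: "\<And>t. \<phi> t = (\<Sum>i<n. a i * \<sigma> (w i * t + b i))"
    using assms unfolding shallow_net_def by blast
  have repr: "\<phi> (\<alpha> * t + \<beta>) = (\<Sum>i<n. a i * \<sigma> ((w i * \<alpha>) * t + (w i * \<beta> + b i)))" for t
    by (simp add: \<phi> algebra_simps)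
  then show ?thesis unfolding shallow_net_def by (intro exI allI) (rule repr)
qed

definition net_approximable :: "(real \<Rightarrow> real) \<Rightarrow> (real \<Rightarrow> real) \<Rightarrow> bool" where
  "net_approximable \<sigma> g \<longleftrightarrow>
     (\<forall>R e. 0 < e \<longrightarrow> (\<exists>\<phi>. shallow_net \<sigma> \<phi> \<and> (\<forall>t. \<bar>t\<bar> \<le> R \<longrightarrow> \<bar>g t - \<phi> t\<bar> < e)))"

lemma net_approximableE:
  assumes "net_approximable \<sigma> g" and "0 < e"
  obtains \<phi> where "shallow_net \<sigma> \<phi>" and "\<And>t. \<bar>t\<bar> \<le> R \<Longrightarrow> \<bar>g t - \<phi> t\<bar> < e"
  using assms unfolding net_approximable_def by blast

lemma shallow_net_approximable: "shallow_net \<sigma> \<phi> \<Longrightarrow> net_approximable \<sigma> \<phi>"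
  unfolding net_approximable_def by auto

lemma net_approximable_activation: "net_approximable \<sigma> \<sigma>"
  using shallow_net_approximable[OF shallow_net_activation[of \<sigma> 1 0]] by simp

lemma net_approximable_closed:
  assumes "\<And>R e. 0 < e \<Longrightarrow> \<exists>g'. net_approximable \<sigma> g' \<and> (\<forall>t. \<bar>t\<bar> \<le> R \<longrightarrow> \<bar>g t - g' t\<bar> < e)"
  shows "net_approximable \<sigma> g"
  unfolding net_approximable_def
proof (intro allI impI)
  fix R e :: real assume "0 < e"
  then have "0 < e/2" by simp
  then obtain g' where g': "net_approximable \<sigma> g'" "\<And>t. \<bar>t\<bar> \<le> R \<Longrightarrow> \<bar>g t - g' t\<bar> < e/2"
    using assms[of "e/2" R] by auto
  obtain \<phi> where \<phi>: "shallow_net \<sigma> \<phi>" "\<And>t. \<bar>t\<bar> \<le> R \<Longrightarrow> \<bar>g' t - \<phi> t\<bar> < e/2"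
    by (rule net_approximableE[OF g'(1) \<open>0 < e/2\<close>, where R=R]) blast
  moreover have "\<bar>g t - \<phi> t\<bar> < e" if "\<bar>t\<bar> \<le> R" for t
    using g'(2)[OF that] \<phi>(2)[OF that] by linarith
  ultimately show "\<exists>\<phi>. shallow_net \<sigma> \<phi> \<and> (\<forall>t. \<bar>t\<bar> \<le> R \<longrightarrow> \<bar>g t - \<phi> t\<bar> < e)"
    by blast
qed

lemma net_approximable_add:
  assumes "net_approximable \<sigma> f" and "net_approximable \<sigma> g"
  shows "net_approximable \<sigma> (\<lambda>t. f t + g t)"
proof (rule net_approximable_closed)
  fix R e :: real assume "0 < e"
  then have "0 < e/2" by simp
  obtain \<phi> where \<phi>: "shallow_net \<sigma> \<phi>" "\<And>t. \<bar>t\<bar> \<le> R \<Longrightarrow> \<bar>f t - \<phi> t\<bar> < e/2"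
    by (rule net_approximableE[OF assms(1) \<open>0 < e/2\<close>, where R=R]) blast
  obtain \<psi> where \<psi>: "shallow_net \<sigma> \<psi>" "\<And>t. \<bar>t\<bar> \<le> R \<Longrightarrow> \<bar>g t - \<psi> t\<bar> < e/2"
    by (rule net_approximableE[OF assms(2) \<open>0 < e/2\<close>, where R=R]) blast
  have "\<bar>f t + g t - (\<phi> t + \<psi> t)\<bar> < e" if "\<bar>t\<bar> \<le> R" for t
    using \<phi>(2)[OF that] \<psi>(2)[OF that] by linarith
  then show "\<exists>g'. net_approximable \<sigma> g' \<and> (\<forall>t. \<bar>t\<bar> \<le> R \<longrightarrow> \<bar>f t + g t - g' t\<bar> < e)"
    using \<phi>(1) \<psi>(1) by (blast intro: shallow_net_approximable shallow_net_add)
qed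

lemma net_approximable_cmult:
  assumes "net_approximable \<sigma> f" shows "net_approximable \<sigma> (\<lambda>t. c * f t)"
proof (rule net_approximable_closed)
  fix R e :: real assume "0 < e"
  then have "0 < e / (\<bar>c\<bar> + 1)" by simp
  then obtain \<phi> where \<phi>: "shallow_net \<sigma> \<phi>" "\<And>t. \<bar>t\<bar> \<le> R \<Longrightarrow> \<bar>f t - \<phi> t\<bar> < e / (\<bar>c\<bar> + 1)"
    by (rule net_approximableE[OF assms, where R=R]) blast
  have "\<bar>c * f t - c * \<phi> t\<bar> < e" if "\<bar>t\<bar> \<le> R" for t
  proof -
    have "\<bar>c * f t - c * \<phi> t\<bar> = \<bar>c\<bar> * \<bar>f t - \<phi> t\<bar>"
      by (simp flip: abs_mult right_diff_distrib)
    also have "\<dots> \<le> \<bar>c\<bar> * (e / (\<bar>c\<bar> + 1))" using \<phi>(2)[OF that] by (intro mult_left_mono) auto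
    also have "\<dots> < e" using \<open>0 < e\<close> by (simp add: field_simps)
    finally show ?thesis .
  qed
  then show "\<exists>g'. net_approximable \<sigma> g' \<and> (\<forall>t. \<bar>t\<bar> \<le> R \<longrightarrow> \<bar>c * f t - g' t\<bar> < e)"
    using \<phi>(1) by (blast intro: shallow_net_approximable shallow_net_cmult)
qed

lemma net_approximable_diff:
  "net_approximable \<sigma> f \<Longrightarrow> net_approximable \<sigma> g \<Longrightarrow> net_approximable \<sigma> (\<lambda>t. f t - g t)"
  using net_approximable_add[of \<sigma> f "\<lambda>t. -1 * g t"] net_approximable_cmult[of \<sigma> g "-1"] by simp

lemma net_approximable_sum:
  fixes n :: nat
  shows "(\<And>i. i < n \<Longrightarrow> net_approximable \<sigma> (F i)) \<Longrightarrow> net_approximable \<sigma> (\<lambda>t. \<Sum>i<n. F i t)"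
proof (induction n)
  case 0
  then show ?case using shallow_net_approximable[OF shallow_net_zero] by simp
next
  case (Suc n)
  then show ?case using net_approximable_add[of \<sigma> "\<lambda>t. \<Sum>i<n. F i t" "F n"] by simp
qed

lemma net_approximable_affine:
  assumes "net_approximable \<sigma> g" shows "net_approximable \<sigma> (\<lambda>t. g (\<alpha> * t + \<beta>))"
proof (rule net_approximable_closed)
  fix R e :: real assume "0 < e"
  obtain \<phi> where \<phi>: "shallow_net \<sigma> \<phi>"
    "\<And>s. \<bar>s\<bar> \<le> \<bar>\<alpha>\<bar> * \<bar>R\<bar> + \<bar>\<beta>\<bar> \<Longrightarrow> \<bar>g s - \<phi> s\<bar> < e"
    by (rule net_approximableE[OF assms \<open>0 < e\<close>, where R="\<bar>\<alpha>\<bar> * \<bar>R\<bar> + \<bar>\<beta>\<bar>"]) blast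
  have "\<bar>\<alpha> * t + \<beta>\<bar> \<le> \<bar>\<alpha>\<bar> * \<bar>R\<bar> + \<bar>\<beta>\<bar>" if "\<bar>t\<bar> \<le> R" for t
    using that abs_triangle_ineq[of "\<alpha> * t" \<beta>] mult_left_mono[of "\<bar>t\<bar>" "\<bar>R\<bar>" "\<bar>\<alpha>\<bar>"]
    by (simp add: abs_mult)
  then show "\<exists>g'. net_approximable \<sigma> g' \<and> (\<forall>t. \<bar>t\<bar> \<le> R \<longrightarrow> \<bar>g (\<alpha> * t + \<beta>) - g' t\<bar> < e)"
    using \<phi> by (blast intro: shallow_net_approximable shallow_net_affine)
qed

section \<open>Running means and difference quotients\<close>

definition running_mean :: "real \<Rightarrow> (real \<Rightarrow> real) \<Rightarrow> real \<Rightarrow> real" where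
  "running_mean h g t = integral {0..h} (\<lambda>s. g (t + s)) / h"

definition diff_quotient :: "real \<Rightarrow> (real \<Rightarrow> real) \<Rightarrow> real \<Rightarrow> real" where
  "diff_quotient h g t = (g (t + h) - g t) / h"

lemma continuous_on_compose_add_left:
  "continuous_on UNIV (g :: real \<Rightarrow> real) \<Longrightarrow> continuous_on A (\<lambda>s. g (t + s))"
  by (rule continuous_on_compose2[of UNIV g]) (auto intro!: continuous_intros)

lemma continuous_on_compose_add_right:
  "continuous_on UNIV (g :: real \<Rightarrow> real) \<Longrightarrow> continuous_on A (\<lambda>s. g (s + t))"
  by (rule continuous_on_compose2[of UNIV g]) (auto intro!: continuous_intros)

lemma integral_translate:
  "integral {p..q} (\<lambda>s. g (t + s)) = integral {t + p..t + q} (g :: real \<Rightarrow> real)"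
  using integral_shift_Icc_real[of p q g t] by (simp add: o_def add.commute)

lemma has_real_derivative_running_mean:
  assumes "h > 0" and "continuous_on UNIV g"
  shows "(running_mean h g has_real_derivative diff_quotient h g t) (at t)"
proof -
  define a where "a = t - 1"
  define b where "b = t + h + 1"
  define G where "G u = integral {a..u} g" for u
  have "continuous_on {a..b} g" using assms(2) continuous_on_subset by blast
  then have G': "(G has_real_derivative g x) (at x)" if "a < x" "x < b" for x
    using integral_has_real_derivative[of a b g x] at_within_Icc_at[OF that] that
    unfolding G_def by simp
  have mean: "running_mean h g u = (G (u + h) - G u) / h" if "u \<in> {t - 1<..<t + 1}" for u
  proof -
    have "integral {a..u} g + integral {u..u + h} g = integral {a..u + h} g"
      using that assms
      by (intro Henstock_Kurzweil_Integration.integral_combine)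
         (auto simp: a_def intro!: integrable_continuous_real continuous_on_subset[OF assms(2)])
    then show ?thesis unfolding running_mean_def G_def integral_translate by (simp add: algebra_simps)
  qed
  have "((\<lambda>u. G (u + h)) has_real_derivative g (t + h)) (at t)"
    using DERIV_shift[of G "g (t + h)" t h] G'[of "t + h"] assms(1) by (simp add: a_def b_def)
  moreover have "(G has_real_derivative g t) (at t)" using G'[of t] assms(1) by (simp add: a_def b_def)
  ultimately have "((\<lambda>u. (G (u + h) - G u) / h) has_real_derivative (g (t + h) - g t) / h) (at t)"
    by (intro DERIV_cdivide DERIV_diff)
  then show ?thesis unfolding diff_quotient_def
    by (rule has_field_derivative_transform_within_open[where S="{t - 1<..<t + 1}"]) (use mean in auto)
qed

lemma continuous_on_running_mean:
  assumes "h > 0" and "continuous_on UNIV g" shows "continuous_on UNIV (running_mean h g)"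
  by (intro continuous_at_imp_continuous_on ballI DERIV_isCont[OF has_real_derivative_running_mean[OF assms]])

lemma continuous_on_diff_quotient:
  assumes "continuous_on UNIV g" shows "continuous_on UNIV (diff_quotient h g)"
proof -
  have "diff_quotient h g = (\<lambda>t. (g (t + h) - g t) * (1 / h))"
    unfolding diff_quotient_def by auto
  then show ?thesis
    by (simp only:) (intro continuous_on_mult_right continuous_on_diff continuous_on_compose_add_right assms)
qed

lemma continuous_on_funpow_diff_quotient:
  "continuous_on UNIV g \<Longrightarrow> continuous_on UNIV ((diff_quotient h ^^ m) g)"
  by (induction m) (auto intro: continuous_on_diff_quotient)

lemma continuous_on_funpow_running_mean:
  "h > 0 \<Longrightarrow> continuous_on UNIV g \<Longrightarrow> continuous_on UNIV ((running_mean h ^^ m) g)"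
  by (induction m) (auto intro: continuous_on_running_mean)

lemma diff_quotient_running_mean:
  assumes "h > 0" and "continuous_on UNIV g"
  shows "diff_quotient h (running_mean h g) = running_mean h (diff_quotient h g)"
proof
  fix t
  have "(\<lambda>s. g (t + h + s)) integrable_on {0..h}" "(\<lambda>s. g (t + s)) integrable_on {0..h}"
    by (intro integrable_continuous_real continuous_on_compose_add_left assms)+
  moreover have "(\<lambda>s. diff_quotient h g (t + s)) = (\<lambda>s. (g (t + h + s) - g (t + s)) * (1/h))"
    unfolding diff_quotient_def by (auto simp: ac_simps)
  ultimately have "running_mean h (diff_quotient h g) t
      = (integral {0..h} (\<lambda>s. g (t + h + s)) - integral {0..h} (\<lambda>s. g (t + s))) * (1/h) / h"
    unfolding running_mean_def integral_mult_right by (simp add: integral_diff)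
  then show "diff_quotient h (running_mean h g) t = running_mean h (diff_quotient h g) t"
    unfolding diff_quotient_def running_mean_def by (simp add: diff_divide_distrib)
qed

lemma funpow_diff_quotient_running_mean:
  assumes "h > 0" and "continuous_on UNIV g"
  shows "(diff_quotient h ^^ m) (running_mean h g) = running_mean h ((diff_quotient h ^^ m) g)"
  by (induction m)
     (simp_all add: diff_quotient_running_mean[OF assms(1) continuous_on_funpow_diff_quotient[OF assms(2)]])

lemma running_mean_close:
  assumes "h > 0" and "continuous_on UNIV g" and "\<And>s. s \<in> {u..u + h} \<Longrightarrow> \<bar>g s - c\<bar> \<le> \<eta>"
  shows "\<bar>running_mean h g u - c\<bar> \<le> \<eta>"
proof -
  have "(\<lambda>s. g (u + s)) integrable_on {0..h}"
    by (intro integrable_continuous_real continuous_on_compose_add_left assms)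
  then have "integral {0..h} (\<lambda>s. g (u + s) - c) = integral {0..h} (\<lambda>s. g (u + s)) - h * c"
    using integral_diff[OF _ integrable_const_ivl[of c 0 h]] assms(1) by simp
  then have mean: "running_mean h g u - c = integral {0..h} (\<lambda>s. g (u + s) - c) / h"
    unfolding running_mean_def using assms(1) by (simp add: field_simps)
  have "norm (integral {0..h} (\<lambda>s. g (u + s) - c)) \<le> \<eta> * (h - 0)"
    using assms by (intro integral_bound continuous_intros continuous_on_compose_add_left) auto
  then show ?thesis unfolding mean using assms(1) by (simp add: abs_divide pos_divide_le_eq)
qed

lemma running_mean_eq_sum:
  assumes "n > 0" and "h > 0" and "continuous_on UNIV g"
  shows "running_mean h g t = (\<Sum>i<n. running_mean (h / n) g (t + real i * (h / n))) / n"
proof -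
  define \<delta> where "\<delta> = h / n"
  have "\<delta> > 0" using assms(1,2) by (simp add: \<delta>_def)
  have "integral {0..real m * \<delta>} (\<lambda>s. g (t + s)) = (\<Sum>i<m. integral {0..\<delta>} (\<lambda>s. g (t + real i * \<delta> + s)))"
    for m
  proof (induction m)
    case (Suc m)
    have "integral {0..real m * \<delta>} (\<lambda>s. g (t + s)) + integral {real m * \<delta>..real (Suc m) * \<delta>} (\<lambda>s. g (t + s))
        = integral {0..real (Suc m) * \<delta>} (\<lambda>s. g (t + s))"
      using \<open>\<delta> > 0\<close>
      by (intro Henstock_Kurzweil_Integration.integral_combine integrable_continuous_real
          continuous_on_compose_add_left assms(3)) auto
    moreover have "integral {real m * \<delta>..real (Suc m) * \<delta>} (\<lambda>s. g (t + s))
        = integral {0..\<delta>} (\<lambda>s. g (t + real m * \<delta> + s))"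
      unfolding integral_translate by (simp add: algebra_simps)
    ultimately show ?case using Suc by simp
  qed simp
  from this[of n] have "integral {0..h} (\<lambda>s. g (t + s)) = (\<Sum>i<n. integral {0..\<delta>} (\<lambda>s. g (t + real i * \<delta> + s)))"
    using assms(1) by (simp add: \<delta>_def)
  then show ?thesis
    unfolding running_mean_def \<delta>_def[symmetric]
    using assms(1,2) by (simp add: sum_divide_distrib[symmetric] sum_distrib_right[symmetric] \<delta>_def)
qed

lemma running_mean_riemann_sum:
  assumes "h > 0" and g: "continuous_on UNIV g" and "0 < e"
  obtains n :: nat
  where "\<And>t. \<bar>t\<bar> \<le> R \<Longrightarrow> \<bar>running_mean h g t - (\<Sum>i<n. inverse n * g (t + real i * (h / n)))\<bar> < e"
proof -
  define K where "K = {-\<bar>R\<bar>..\<bar>R\<bar> + h}"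
  have "uniformly_continuous_on K g"
    using g by (intro compact_uniformly_continuous) (auto simp: K_def intro: continuous_on_subset)
  moreover have "0 < e/2" using \<open>0 < e\<close> by simp
  ultimately obtain d where "0 < d"
    and d: "\<And>x x'. x \<in> K \<Longrightarrow> x' \<in> K \<Longrightarrow> dist x' x < d \<Longrightarrow> dist (g x') (g x) < e/2"
    unfolding uniformly_continuous_on_def by metis
  obtain n :: nat where n: "h / d < n" using reals_Archimedean2 by blast
  moreover have "0 < h / d" using \<open>h > 0\<close> \<open>0 < d\<close> by simp
  ultimately have "0 < n" by simp
  have "h / n < d" using n \<open>0 < d\<close> \<open>0 < n\<close> by (simp add: pos_divide_less_eq mult.commute)
  define \<delta> where "\<delta> = h / n"
  have "0 < \<delta>" "\<delta> < d" "real n * \<delta> = h" using \<open>0 < n\<close> \<open>h > 0\<close> \<open>h / n < d\<close> by (auto simp: \<delta>_def)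
  have close: "\<bar>running_mean \<delta> g (t + real i * \<delta>) - g (t + real i * \<delta>)\<bar> \<le> e/2"
    if "\<bar>t\<bar> \<le> R" "i < n" for t i
  proof (rule running_mean_close[OF \<open>0 < \<delta>\<close> g])
    fix s assume s: "s \<in> {t + real i * \<delta>..t + real i * \<delta> + \<delta>}"
    have "real (Suc i) * \<delta> \<le> h"
      using \<open>i < n\<close> \<open>0 < \<delta>\<close> \<open>real n * \<delta> = h\<close> by (metis Suc_leI mult_right_mono of_nat_le_iff less_imp_le)
    then have "real i * \<delta> + \<delta> \<le> h" by (simp add: algebra_simps)
    moreover have "0 \<le> real i * \<delta>" "-\<bar>R\<bar> \<le> t" "t \<le> \<bar>R\<bar>" using \<open>0 < \<delta>\<close> that(1) by auto
    ultimately have "t + real i * \<delta> \<in> K" "s \<in> K"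
      using s unfolding K_def atLeastAtMost_iff by linarith+
    moreover have "dist s (t + real i * \<delta>) < d" using s \<open>\<delta> < d\<close> by (auto simp: dist_real_def)
    ultimately show "\<bar>g s - g (t + real i * \<delta>)\<bar> \<le> e/2"
      using d by (fastforce simp: dist_real_def)
  qed
  have "\<bar>running_mean h g t - (\<Sum>i<n. inverse n * g (t + real i * \<delta>))\<bar> < e" if "\<bar>t\<bar> \<le> R" for t
  proof -
    have "running_mean h g t - (\<Sum>i<n. inverse n * g (t + real i * \<delta>))
        = (\<Sum>i<n. running_mean \<delta> g (t + real i * \<delta>) - g (t + real i * \<delta>)) / n"
      unfolding running_mean_eq_sum[OF \<open>0 < n\<close> \<open>h > 0\<close> g] \<delta>_def
      by (simp add: sum_subtractf sum_divide_distrib divide_inverse_commute right_diff_distrib sum_distrib_left)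
    also have "\<bar>\<dots>\<bar> \<le> (\<Sum>i<n. e/2) / n"
      unfolding abs_divide abs_of_nat using close[OF that] \<open>0 < n\<close>
      by (intro divide_right_mono order.trans[OF sum_abs] sum_mono) auto
    also have "\<dots> < e" using \<open>0 < n\<close> \<open>0 < e\<close> by simp
    finally show ?thesis .
  qed
  then show ?thesis unfolding \<delta>_def by (rule that)
qed

lemma net_approximable_running_mean:
  assumes "h > 0" and g: "continuous_on UNIV g" and "net_approximable \<sigma> g"
  shows "net_approximable \<sigma> (running_mean h g)"
proof (rule net_approximable_closed)
  fix R e :: real assume "0 < e"
  obtain n :: nat
    where "\<And>t. \<bar>t\<bar> \<le> R \<Longrightarrow> \<bar>running_mean h g t - (\<Sum>i<n. inverse n * g (t + real i * (h / n)))\<bar> < e"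
    by (rule running_mean_riemann_sum[OF \<open>h > 0\<close> g \<open>0 < e\<close>, where R=R]) blast
  moreover have "net_approximable \<sigma> (\<lambda>t. \<Sum>i<n. inverse n * g (t + real i * (h / n)))"
    using net_approximable_affine[OF assms(3), of 1] by (intro net_approximable_sum net_approximable_cmult) simp
  ultimately show "\<exists>g'. net_approximable \<sigma> g' \<and> (\<forall>t. \<bar>t\<bar> \<le> R \<longrightarrow> \<bar>running_mean h g t - g' t\<bar> < e)"
    by blast
qed

lemma uniform_first_order_approx:
  fixes \<phi> \<phi>' :: "real \<Rightarrow> real"
  assumes der: "\<And>x. (\<phi> has_real_derivative \<phi>' x) (at x)"
    and "continuous_on UNIV \<phi>'" and "0 < e"
  obtains d where "0 < d" and "\<And>c s. \<bar>c\<bar> \<le> L \<Longrightarrow> \<bar>s\<bar> \<le> d \<Longrightarrow> \<bar>\<phi> (c + s) - \<phi> c - \<phi>' c * s\<bar> \<le> e * \<bar>s\<bar>"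
proof -
  define K where "K = {-\<bar>L\<bar> - 1..\<bar>L\<bar> + 1}"
  have "uniformly_continuous_on K \<phi>'"
    by (intro compact_uniformly_continuous continuous_on_subset[OF assms(2)]) (auto simp: K_def)
  then obtain d0 where "0 < d0"
    and d0: "\<And>x x'. x \<in> K \<Longrightarrow> x' \<in> K \<Longrightarrow> dist x' x < d0 \<Longrightarrow> dist (\<phi>' x') (\<phi>' x) < e"
    using \<open>0 < e\<close> unfolding uniformly_continuous_on_def by metis
  show ?thesis
  proof (rule that[of "min 1 (d0/2)"])
    show "0 < min 1 (d0/2)" using \<open>0 < d0\<close> by simp
    fix c s assume c: "\<bar>c\<bar> \<le> L" and s: "\<bar>s\<bar> \<le> min 1 (d0/2)"
    have "((\<lambda>u. \<phi> (u + c)) has_real_derivative \<phi>' (u + c)) (at u)" for u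
      using der[of "u + c"] DERIV_shift by blast
    then obtain \<xi> where \<xi>: "\<bar>\<xi>\<bar> \<le> \<bar>s\<bar>" and mvt: "\<phi> (s + c) = \<phi> c + \<phi>' (\<xi> + c) * s"
      using Maclaurin_bi_le[of "\<lambda>m u. if m = 0 then \<phi> (u + c) else \<phi>' (u + c)" "\<lambda>u. \<phi> (u + c)" 1 s]
      by auto
    have "c \<in> K" "\<xi> + c \<in> K" using c s \<xi> by (auto simp: K_def)
    then have "\<bar>\<phi>' (\<xi> + c) - \<phi>' c\<bar> \<le> e"
      using d0[of c "\<xi> + c"] s \<xi> \<open>0 < d0\<close> by (auto simp: dist_real_def)
    then show "\<bar>\<phi> (c + s) - \<phi> c - \<phi>' c * s\<bar> \<le> e * \<bar>s\<bar>"
      using mvt by (simp add: add.commute abs_mult mult_right_mono flip: left_diff_distrib)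
  qed
qed

lemma net_approximable_derivative:
  assumes approx: "\<And>w b. net_approximable \<sigma> (\<lambda>t. t ^ j * \<phi> (w * t + b))"
    and der: "\<And>x. (\<phi> has_real_derivative \<phi>' x) (at x)" and "continuous_on UNIV \<phi>'"
  shows "net_approximable \<sigma> (\<lambda>t. t ^ Suc j * \<phi>' (w * t + b))"
proof (rule net_approximable_closed)
  fix R e :: real assume "0 < e"
  define R0 where "R0 = \<bar>R\<bar> + 1"
  define \<eta> where "\<eta> = e / (2 * R0 ^ Suc j)"
  have "1 \<le> R0" "0 < \<eta>" using \<open>0 < e\<close> by (auto simp: R0_def \<eta>_def)
  then obtain d where "0 < d"
    and d: "\<And>c s. \<bar>c\<bar> \<le> \<bar>w\<bar> * R0 + \<bar>b\<bar> \<Longrightarrow> \<bar>s\<bar> \<le> d \<Longrightarrow> \<bar>\<phi> (c + s) - \<phi> c - \<phi>' c * s\<bar> \<le> \<eta> * \<bar>s\<bar>"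
    using uniform_first_order_approx[OF der assms(3)] by metis
  define \<delta> where "\<delta> = d / R0"
  have "0 < \<delta>" using \<open>0 < d\<close> \<open>1 \<le> R0\<close> by (simp add: \<delta>_def)
  define g' where "g' t = inverse \<delta> * (t ^ j * \<phi> ((w + \<delta>) * t + b) - t ^ j * \<phi> (w * t + b))" for t
  have "\<bar>t ^ Suc j * \<phi>' (w * t + b) - g' t\<bar> < e" if "\<bar>t\<bar> \<le> R" for t
  proof -
    define c where "c = w * t + b"
    have t: "\<bar>t\<bar> \<le> R0" using that by (simp add: R0_def)
    have "\<bar>c\<bar> \<le> \<bar>w\<bar> * R0 + \<bar>b\<bar>"
      using t abs_triangle_ineq[of "w * t" b] mult_left_mono[OF t, of "\<bar>w\<bar>"] by (simp add: c_def abs_mult)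
    moreover have "\<bar>\<delta> * t\<bar> \<le> d"
      using mult_left_mono[OF t, of \<delta>] \<open>0 < \<delta>\<close> \<open>0 < d\<close> \<open>1 \<le> R0\<close> by (simp add: \<delta>_def abs_mult)
    ultimately have rem: "\<bar>\<phi> (c + \<delta> * t) - \<phi> c - \<phi>' c * (\<delta> * t)\<bar> \<le> \<eta> * \<bar>\<delta> * t\<bar>"
      by (rule d)
    have "t ^ Suc j * \<phi>' c - g' t = - (t ^ j) * ((\<phi> (c + \<delta> * t) - \<phi> c - \<phi>' c * (\<delta> * t)) / \<delta>)"
      using \<open>0 < \<delta>\<close> by (simp add: g'_def c_def field_simps)
    then have "\<bar>t ^ Suc j * \<phi>' c - g' t\<bar> = \<bar>t\<bar> ^ j * (\<bar>\<phi> (c + \<delta> * t) - \<phi> c - \<phi>' c * (\<delta> * t)\<bar> / \<delta>)"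
      using \<open>0 < \<delta>\<close> by (simp add: abs_mult power_abs abs_divide)
    also have "\<dots> \<le> \<bar>t\<bar> ^ j * (\<eta> * \<bar>t\<bar>)"
      using rem \<open>0 < \<delta>\<close> by (intro mult_left_mono) (auto simp: pos_divide_le_eq abs_mult ac_simps)
    also have "\<dots> = \<eta> * \<bar>t\<bar> ^ Suc j" by (simp add: ac_simps)
    also have "\<dots> \<le> \<eta> * R0 ^ Suc j" using t \<open>0 < \<eta>\<close> by (intro mult_left_mono power_mono) auto
    also have "\<dots> < e" using \<open>0 < e\<close> \<open>1 \<le> R0\<close> by (simp add: \<eta>_def)
    finally show ?thesis by (simp add: c_def)
  qed
  moreover have "net_approximable \<sigma> g'"
    unfolding g'_def by (intro net_approximable_cmult net_approximable_diff approx)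
  ultimately show "\<exists>g'. net_approximable \<sigma> g' \<and> (\<forall>t. \<bar>t\<bar> \<le> R \<longrightarrow> \<bar>t ^ Suc j * \<phi>' (w * t + b) - g' t\<bar> < e)"
    by blast
qed

definition mean_difference :: "real \<Rightarrow> nat \<Rightarrow> (real \<Rightarrow> real) \<Rightarrow> nat \<Rightarrow> real \<Rightarrow> real" where
  "mean_difference h k g m = (diff_quotient h ^^ m) ((running_mean h ^^ (k - m)) g)"

lemma continuous_on_mean_difference:
  "h > 0 \<Longrightarrow> continuous_on UNIV g \<Longrightarrow> continuous_on UNIV (mean_difference h k g m)"
  unfolding mean_difference_def
  by (intro continuous_on_funpow_diff_quotient continuous_on_funpow_running_mean)

lemma has_real_derivative_mean_difference:
  assumes "h > 0" and g: "continuous_on UNIV g" and "m < k"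
  shows "(mean_difference h k g m has_real_derivative mean_difference h k g (Suc m) x) (at x)"
proof -
  define G where "G = (diff_quotient h ^^ m) ((running_mean h ^^ (k - Suc m)) g)"
  have "k - m = Suc (k - Suc m)" using \<open>m < k\<close> by simp
  then have "mean_difference h k g m = running_mean h G"
    unfolding mean_difference_def G_def
    using funpow_diff_quotient_running_mean[OF \<open>h > 0\<close> continuous_on_funpow_running_mean[OF \<open>h > 0\<close> g]]
    by simp
  moreover have "mean_difference h k g (Suc m) = diff_quotient h G"
    unfolding mean_difference_def G_def by simp
  moreover have "continuous_on UNIV G"
    unfolding G_def by (intro continuous_on_funpow_diff_quotient continuous_on_funpow_running_mean \<open>h > 0\<close> g)
  ultimately show ?thesis using has_real_derivative_running_mean[OF \<open>h > 0\<close>] by simp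
qed

lemma net_approximable_funpow_running_mean:
  "h > 0 \<Longrightarrow> continuous_on UNIV g \<Longrightarrow> net_approximable \<sigma> g \<Longrightarrow> net_approximable \<sigma> ((running_mean h ^^ n) g)"
  by (induction n) (auto intro!: net_approximable_running_mean continuous_on_funpow_running_mean)

text \<open>Differentiating \<open>t \<mapsto> (running_mean h ^^ k) \<sigma> (w * t + b)\<close> \<open>k\<close> times with respect to \<open>w\<close>
  yields \<open>t ^ k\<close> times the constant \<open>(diff_quotient h ^^ k) \<sigma> b\<close> at \<open>w = 0\<close>.\<close>
lemma net_approximable_power_if_diff_quotient:
  assumes \<sigma>: "continuous_on UNIV \<sigma>" and "h > 0" and nz: "(diff_quotient h ^^ k) \<sigma> b \<noteq> 0"
  shows "net_approximable \<sigma> (\<lambda>t. t ^ k)"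
proof -
  have "net_approximable \<sigma> (mean_difference h k \<sigma> 0)"
    unfolding mean_difference_def
    using net_approximable_funpow_running_mean[OF \<open>h > 0\<close> \<sigma> net_approximable_activation] by simp
  have "\<forall>w b. net_approximable \<sigma> (\<lambda>t. t ^ j * mean_difference h k \<sigma> j (w * t + b))" if "j \<le> k" for j
    using that
  proof (induction j)
    case 0
    then show ?case using net_approximable_affine[OF \<open>net_approximable \<sigma> (mean_difference h k \<sigma> 0)\<close>] by simp
  next
    case (Suc j)
    then show ?case
      by (intro allI net_approximable_derivative[where \<phi>="mean_difference h k \<sigma> j"]
          has_real_derivative_mean_difference continuous_on_mean_difference \<open>h > 0\<close> \<sigma>) auto
  qed
  from this[of k] have "net_approximable \<sigma> (\<lambda>t. t ^ k * mean_difference h k \<sigma> k (0 * t + b))" by blast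
  then have "net_approximable \<sigma> (\<lambda>t. inverse ((diff_quotient h ^^ k) \<sigma> b) * (t ^ k * (diff_quotient h ^^ k) \<sigma> b))"
    unfolding mean_difference_def by (intro net_approximable_cmult) simp
  moreover have "(\<lambda>t. inverse ((diff_quotient h ^^ k) \<sigma> b) * (t ^ k * (diff_quotient h ^^ k) \<sigma> b)) = (\<lambda>t. t ^ k)"
    using nz by (simp add: fun_eq_iff)
  ultimately show ?thesis by simp
qed

section \<open>Non-polynomial activations\<close>

lemma lagrange_basis:
  obtains L :: "nat \<Rightarrow> real poly"
  where "\<And>i. i \<le> d \<Longrightarrow> degree (L i) \<le> d"
    and "\<And>i l. i \<le> d \<Longrightarrow> l \<le> d \<Longrightarrow> poly (L i) (real l) = (if l = i then 1 else 0)"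
proof
  define L where "L i = (\<Prod>j\<in>{..d} - {i}. [:- real j / (real i - real j), 1 / (real i - real j):])" for i
  show "degree (L i) \<le> d" if "i \<le> d" for i
  proof -
    have "degree (L i) \<le> (\<Sum>j\<in>{..d} - {i}. degree [:- real j / (real i - real j), 1 / (real i - real j):])"
      unfolding L_def by (rule order.trans[OF degree_prod_sum_le]) auto
    also have "\<dots> \<le> (\<Sum>j\<in>{..d} - {i}. 1)" by (intro sum_mono) auto
    finally show ?thesis using that by simp
  qed
  fix i l assume "i \<le> d" "l \<le> d"
  have "poly [:- real j / (real i - real j), 1 / (real i - real j):] (real i) = 1" if "j \<noteq> i" for j
    using that by (simp add: divide_simps)
  then show "poly (L i) (real l) = (if l = i then 1 else 0)"
    unfolding L_def poly_prod using \<open>l \<le> d\<close> by (auto intro!: prod.neutral prod_zero bexI[of _ l])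
qed

lemma polynomial_fun_pointwise_limit:
  fixes P :: "nat \<Rightarrow> real poly"
  assumes deg: "\<And>n. degree (P n) \<le> d" and lim: "\<And>t. (\<lambda>n. poly (P n) t) \<longlonglongrightarrow> g t"
  shows "polynomial_fun g"
proof -
  obtain L :: "nat \<Rightarrow> real poly" where L: "\<And>i. i \<le> d \<Longrightarrow> degree (L i) \<le> d"
    "\<And>i l. i \<le> d \<Longrightarrow> l \<le> d \<Longrightarrow> poly (L i) (real l) = (if l = i then 1 else 0)"
    using lagrange_basis by blast
  have interpolation: "p = (\<Sum>i\<le>d. smult (poly p (real i)) (L i))" if "degree p \<le> d" for p
  proof (rule poly_eqI_degree[of "real ` {..d}"])
    fix x assume "x \<in> real ` {..d}"
    then obtain l where "l \<le> d" "x = real l" by auto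
    then show "poly p x = poly (\<Sum>i\<le>d. smult (poly p (real i)) (L i)) x"
      by (simp add: poly_sum L(2) if_distrib cong: if_cong)
  next
    show "degree p < card (real ` {..d})" "degree (\<Sum>i\<le>d. smult (poly p (real i)) (L i)) < card (real ` {..d})"
      using that L(1) by (auto simp: card_image intro!: le_imp_less_Suc degree_sum_le order.trans[OF degree_smult_le])
  qed
  have "g t = poly (\<Sum>i\<le>d. smult (g (real i)) (L i)) t" for t
  proof (rule LIMSEQ_unique[OF lim])
    show "(\<lambda>n. poly (P n) t) \<longlonglongrightarrow> poly (\<Sum>i\<le>d. smult (g (real i)) (L i)) t"
      by (subst interpolation[OF deg]) (auto simp: poly_sum intro!: tendsto_sum tendsto_mult_right lim)
  qed
  then show ?thesis unfolding polynomial_fun_def poly_altdef by blast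
qed

lemma funpow_running_mean_close:
  assumes "h > 0" and g: "continuous_on UNIV g"
    and "\<And>s. s \<in> {u..u + real k * h} \<Longrightarrow> \<bar>g s - c\<bar> \<le> \<eta>"
  shows "\<bar>(running_mean h ^^ k) g u - c\<bar> \<le> \<eta>"
  using assms(3)
proof (induction k arbitrary: u)
  case (Suc k)
  show ?case
  proof (simp, rule running_mean_close[OF \<open>h > 0\<close> continuous_on_funpow_running_mean[OF \<open>h > 0\<close> g]])
    fix s assume "s \<in> {u..u + h}"
    then show "\<bar>(running_mean h ^^ k) g s - c\<bar> \<le> \<eta>"
      by (intro Suc.IH Suc.prems) (auto simp: algebra_simps)
  qed
qed simp

lemma funpow_running_mean_tendsto:
  assumes g: "continuous_on UNIV g"
  shows "(\<lambda>n. (running_mean (inverse (real (Suc n))) ^^ k) g t) \<longlonglongrightarrow> g t"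
proof (rule LIMSEQ_I)
  fix r :: real assume "r > 0"
  then obtain \<delta> where "\<delta> > 0" and \<delta>: "\<And>s. dist s t < \<delta> \<Longrightarrow> dist (g s) (g t) < r/2"
    using g unfolding continuous_on_iff by (metis UNIV_I half_gt_zero)
  then have "0 < \<delta> / (real k + 1)" by simp
  then obtain N where N: "inverse (real (Suc N)) < \<delta> / (real k + 1)"
    using reals_Archimedean by blast
  have "norm ((running_mean (inverse (real (Suc n))) ^^ k) g t - g t) < r" if "n \<ge> N" for n
  proof -
    define h where "h = inverse (real (Suc n))"
    have "0 < h" "h \<le> inverse (real (Suc N))" using that by (simp_all add: h_def field_simps)
    then have "h * (real k + 1) \<le> inverse (real (Suc N)) * (real k + 1)" by (intro mult_right_mono) auto
    moreover have "inverse (real (Suc N)) * (real k + 1) < \<delta>" using N by (simp add: pos_less_divide_eq)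
    ultimately have "h * (real k + 1) < \<delta>" by linarith
    then have "real k * h < \<delta>" using \<open>0 < h\<close> by (simp add: algebra_simps)
    then have "\<bar>g s - g t\<bar> \<le> r/2" if "s \<in> {t..t + real k * h}" for s
      using \<delta>[of s] that by (auto simp: dist_real_def)
    then have "\<bar>(running_mean h ^^ k) g t - g t\<bar> \<le> r/2"
      by (intro funpow_running_mean_close[OF \<open>0 < h\<close> g])
    then show ?thesis using \<open>r > 0\<close> by (simp add: h_def)
  qed
  then show "\<exists>N. \<forall>n\<ge>N. norm ((running_mean (inverse (real (Suc n))) ^^ k) g t - g t) < r" by blast
qed

text \<open>Otherwise each \<open>(running_mean h ^^ k) \<sigma>\<close> has vanishing \<open>k\<close>-th derivative, so it is a
  polynomial of degree \<open>< k\<close>, and these converge pointwise to \<open>\<sigma>\<close> as \<open>h \<rightarrow> 0\<close>.\<close>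
lemma funpow_diff_quotient_nonzero:
  assumes \<sigma>: "continuous_on UNIV \<sigma>" and "\<not> polynomial_fun \<sigma>"
  shows "\<exists>h>0. \<exists>b. (diff_quotient h ^^ k) \<sigma> b \<noteq> 0"
proof (rule ccontr)
  assume "\<not> ?thesis"
  then have vanish: "(diff_quotient h ^^ k) \<sigma> b = 0" if "h > 0" for h b
    using that by blast
  define hs where "hs n = inverse (real (Suc n))" for n
  have "hs n > 0" for n by (simp add: hs_def)
  define P where "P n = (\<Sum>m<k. monom (mean_difference (hs n) k \<sigma> m 0 / fact m) m)" for n
  have rep: "(running_mean (hs n) ^^ k) \<sigma> t = poly (P n) t" for n t
  proof -
    obtain s where "(running_mean (hs n) ^^ k) \<sigma> t
        = (\<Sum>m<k. mean_difference (hs n) k \<sigma> m 0 / fact m * t ^ m) + mean_difference (hs n) k \<sigma> k s / fact k * t ^ k"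
      using Maclaurin_bi_le[of "mean_difference (hs n) k \<sigma>" "mean_difference (hs n) k \<sigma> 0" k t]
        has_real_derivative_mean_difference[OF \<open>hs n > 0\<close> \<sigma>] by (auto simp: mean_difference_def)
    moreover have "mean_difference (hs n) k \<sigma> k s = 0"
      using vanish[OF \<open>hs n > 0\<close>] by (simp add: mean_difference_def)
    ultimately show ?thesis by (simp add: P_def poly_sum poly_monom)
  qed
  have deg: "degree (P n) \<le> k" for n
    unfolding P_def by (intro degree_sum_le) (auto intro: order.trans[OF degree_monom_le])
  have lim: "(\<lambda>n. poly (P n) t) \<longlonglongrightarrow> \<sigma> t" for t
    using funpow_running_mean_tendsto[OF \<sigma>, of k t] unfolding rep[symmetric] hs_def .
  from polynomial_fun_pointwise_limit[OF deg lim] assms(2) show False by contradiction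
qed

lemma net_approximable_power:
  assumes "continuous_on UNIV \<sigma>" and "\<not> polynomial_fun \<sigma>"
  shows "net_approximable \<sigma> (\<lambda>t. t ^ k)"
  using funpow_diff_quotient_nonzero[OF assms] net_approximable_power_if_diff_quotient[OF assms(1)] by blast

lemma net_approximable_exp:
  assumes "continuous_on UNIV \<sigma>" and "\<not> polynomial_fun \<sigma>"
  shows "net_approximable \<sigma> exp"
proof (rule net_approximable_closed)
  fix R e :: real assume "0 < e"
  have "(\<lambda>n. inverse (fact n) * \<bar>R\<bar> ^ n) \<longlonglongrightarrow> 0" by (rule summable_LIMSEQ_zero[OF summable_exp])
  moreover have "0 < e / exp \<bar>R\<bar>" using \<open>0 < e\<close> by simp
  ultimately have "eventually (\<lambda>n. inverse (fact n) * \<bar>R\<bar> ^ n < e / exp \<bar>R\<bar>) sequentially"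
    by (rule order_tendstoD)
  then obtain N where N: "inverse (fact N) * \<bar>R\<bar> ^ N < e / exp \<bar>R\<bar>"
    by (auto simp: eventually_sequentially)
  define p where "p t = (\<Sum>m<N. inverse (fact m) * t ^ m)" for t :: real
  have "\<bar>exp t - p t\<bar> < e" if "\<bar>t\<bar> \<le> R" for t
  proof -
    obtain s where s: "\<bar>s\<bar> \<le> \<bar>t\<bar>" and taylor: "exp t = (\<Sum>m<N. t ^ m / fact m) + exp s / fact N * t ^ N"
      using Maclaurin_exp_le by blast
    have "\<bar>exp t - p t\<bar> = exp s / fact N * \<bar>t\<bar> ^ N"
      unfolding taylor p_def by (simp add: abs_mult power_abs divide_inverse_commute)
    also have "\<dots> \<le> exp \<bar>R\<bar> / fact N * \<bar>R\<bar> ^ N"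
      using s that by (intro mult_mono divide_right_mono power_mono) auto
    also have "\<dots> = exp \<bar>R\<bar> * (inverse (fact N) * \<bar>R\<bar> ^ N)" by (simp add: field_simps)
    also have "\<dots> < e" using N by (simp add: pos_less_divide_eq mult.commute)
    finally show ?thesis .
  qed
  moreover have "net_approximable \<sigma> p"
    unfolding p_def by (intro net_approximable_sum net_approximable_cmult net_approximable_power assms)
  ultimately show "\<exists>g'. net_approximable \<sigma> g' \<and> (\<forall>t. \<bar>t\<bar> \<le> R \<longrightarrow> \<bar>exp t - g' t\<bar> < e)"
    by blast
qed

section \<open>Exponential sums and one-hidden-layer networks\<close>

definition exp_sum :: "(nat \<Rightarrow> 'a \<Rightarrow> real) \<Rightarrow> nat \<Rightarrow> (real \<times> (nat \<Rightarrow> real)) list \<Rightarrow> 'a \<Rightarrow> real" where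
  "exp_sum F N ts x = (\<Sum>(c, a)\<leftarrow>ts. c * exp (\<Sum>i<N. a i * F i x))"

lemma exp_sum_append: "exp_sum F N (ts @ us) x = exp_sum F N ts x + exp_sum F N us x"
  by (simp add: exp_sum_def)

lemma exp_sum_mult:
  "exp_sum F N ts x * exp_sum F N us x
     = exp_sum F N [(c * d, \<lambda>i. a i + b i). (c, a) \<leftarrow> ts, (d, b) \<leftarrow> us] x"
proof (induction ts)
  case (Cons t ts)
  have "c * exp (\<Sum>i<N. a i * F i x) * exp_sum F N us x
      = exp_sum F N (map (\<lambda>(d, b). (c * d, \<lambda>i. a i + b i)) us) x" for c a
    by (induction us) (auto simp: exp_sum_def algebra_simps sum.distrib exp_add)
  with Cons show ?case by (cases t) (simp add: exp_sum_def algebra_simps)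
qed (simp add: exp_sum_def)

lemma exp_sum_pad:
  assumes "N \<le> N'"
  shows "exp_sum F N ts = exp_sum F N' (map (\<lambda>(c, a). (c, \<lambda>i. if i < N then a i else 0)) ts)"
proof -
  have "(\<Sum>i<N'. (if i < N then a i else 0) * F i x) = (\<Sum>i<N. a i * F i x)" for a x
    using assms by (intro sum.mono_neutral_cong_right) auto
  then show ?thesis by (auto simp: exp_sum_def fun_eq_iff o_def case_prod_unfold)
qed

lemma continuous_on_exp_sum:
  "(\<And>i. continuous_on K (F i)) \<Longrightarrow> continuous_on K (exp_sum F N ts)"
  unfolding exp_sum_def by (induction ts) (auto intro!: continuous_intros)

definition separates_points :: "'a set \<Rightarrow> (nat \<Rightarrow> 'a \<Rightarrow> real) \<Rightarrow> bool" where
  "separates_points K F \<longleftrightarrow> (\<forall>x\<in>K. \<forall>y\<in>K. x \<noteq> y \<longrightarrow> (\<exists>i. F i x \<noteq> F i y))"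

lemma exp_sum_dense:
  fixes F :: "nat \<Rightarrow> 'a::t2_space \<Rightarrow> real"
  assumes "compact K" and F: "\<And>i. continuous_on K (F i)"
    and "separates_points K F" and "continuous_on K f" and "0 < e"
  obtains N ts where "\<And>x. x \<in> K \<Longrightarrow> \<bar>f x - exp_sum F N ts x\<bar> < e"
proof -
  interpret function_ring_on "{g. \<exists>N ts. g = exp_sum F N ts}" K
  proof
    show "compact K" by fact
  next
    fix g assume "g \<in> {g. \<exists>N ts. g = exp_sum F N ts}"
    then obtain N ts where "g = exp_sum F N ts" by blast
    then show "continuous_on K g" using continuous_on_exp_sum[of K F N ts] F by simp
  next
    fix g h assume "g \<in> {g. \<exists>N ts. g = exp_sum F N ts}" "h \<in> {g. \<exists>N ts. g = exp_sum F N ts}"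
    then obtain N ts M us where g: "g = exp_sum F N ts" and h: "h = exp_sum F M us" by blast
    define ts' where "ts' = map (\<lambda>(c, a). (c, \<lambda>i. if i < N then a i else 0)) ts"
    define us' where "us' = map (\<lambda>(c, a). (c, \<lambda>i. if i < M then a i else 0)) us"
    have g': "g = exp_sum F (max N M) ts'" unfolding g ts'_def by (rule exp_sum_pad) simp
    have h': "h = exp_sum F (max N M) us'" unfolding h us'_def by (rule exp_sum_pad) simp
    have "(\<lambda>x. g x + h x) = exp_sum F (max N M) (ts' @ us')"
      by (simp add: fun_eq_iff g' h' exp_sum_append)
    then show "(\<lambda>x. g x + h x) \<in> {g. \<exists>N ts. g = exp_sum F N ts}" by blast
    have "(\<lambda>x. g x * h x) = exp_sum F (max N M) [(c * d, \<lambda>i. a i + b i). (c, a) \<leftarrow> ts', (d, b) \<leftarrow> us']"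
      by (simp add: fun_eq_iff g' h' exp_sum_mult)
    then show "(\<lambda>x. g x * h x) \<in> {g. \<exists>N ts. g = exp_sum F N ts}" by blast
  next
    fix c :: real
    have "(\<lambda>_. c) = exp_sum F 0 [(c, \<lambda>_. 0)]" unfolding exp_sum_def by (rule ext) simp
    then show "(\<lambda>_. c) \<in> {g. \<exists>N ts. g = exp_sum F N ts}" by blast
  next
    fix x y assume "x \<in> K" "y \<in> K" "x \<noteq> y"
    then obtain i where "F i x \<noteq> F i y" using \<open>separates_points K F\<close> by (auto simp: separates_points_def)
    moreover have "exp_sum F (Suc i) [(1, \<lambda>l. if l = i then 1 else 0)] z = exp (F i z)" for z
      by (simp add: exp_sum_def if_distrib cong: if_cong)
    ultimately show "\<exists>g\<in>{g. \<exists>N ts. g = exp_sum F N ts}. g x \<noteq> g y"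
      by (intro bexI[of _ "exp_sum F (Suc i) [(1, \<lambda>l. if l = i then 1 else 0)]"]) auto
  qed
  from Stone_Weierstrass_basic[OF \<open>continuous_on K f\<close> \<open>0 < e\<close>] that show ?thesis by blast
qed

definition one_layer_net :: "(real \<Rightarrow> real) \<Rightarrow> nat \<Rightarrow> ((nat \<Rightarrow> real) \<Rightarrow> real) \<Rightarrow> bool" where
  "one_layer_net \<sigma> N \<phi> \<longleftrightarrow>
     (\<exists>(D::nat) W c A. \<forall>v. \<phi> v = (\<Sum>h<D. A h * \<sigma> ((\<Sum>i<N. W h i * v i) + c h)))"

lemma one_layer_net_zero: "one_layer_net \<sigma> N (\<lambda>v. 0)"
  unfolding one_layer_net_def by (intro exI[of _ 0]) simp

lemma one_layer_net_add:
  assumes "one_layer_net \<sigma> N \<phi>" and "one_layer_net \<sigma> N \<psi>"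
  shows "one_layer_net \<sigma> N (\<lambda>v. \<phi> v + \<psi> v)"
proof -
  obtain D1 :: nat and W1 c1 A1 where \<phi>: "\<And>v. \<phi> v = (\<Sum>h<D1. A1 h * \<sigma> ((\<Sum>i<N. W1 h i * v i) + c1 h))"
    using assms(1) unfolding one_layer_net_def by blast
  obtain D2 :: nat and W2 c2 A2 where \<psi>: "\<And>v. \<psi> v = (\<Sum>h<D2. A2 h * \<sigma> ((\<Sum>i<N. W2 h i * v i) + c2 h))"
    using assms(2) unfolding one_layer_net_def by blast
  let ?join = "\<lambda>f g h. if h < D1 then f h else g (h - D1)"
  have repr: "\<phi> v + \<psi> v = (\<Sum>h<D1 + D2. ?join A1 A2 h * \<sigma> ((\<Sum>i<N. ?join W1 W2 h i * v i) + ?join c1 c2 h))"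
    for v by (simp add: \<phi> \<psi> sum_lessThan_add)
  then show ?thesis unfolding one_layer_net_def by (intro exI allI) (rule repr)
qed

lemma one_layer_net_ridge:
  assumes "shallow_net \<sigma> \<psi>"
  shows "one_layer_net \<sigma> N (\<lambda>v. \<psi> (\<Sum>i<N. a i * v i))"
proof -
  obtain n :: nat and \<alpha> w b where \<psi>: "\<And>s. \<psi> s = (\<Sum>l<n. \<alpha> l * \<sigma> (w l * s + b l))"
    using assms unfolding shallow_net_def by blast
  have repr: "\<psi> (\<Sum>i<N. a i * v i) = (\<Sum>l<n. \<alpha> l * \<sigma> ((\<Sum>i<N. (w l * a i) * v i) + b l))" for v
    by (simp add: \<psi> sum_distrib_left mult.assoc)
  then show ?thesis unfolding one_layer_net_def by (intro exI allI) (rule repr)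
qed

lemma one_layer_net_mono:
  assumes "one_layer_net \<sigma> N \<phi>" and "N \<le> N'"
  shows "one_layer_net \<sigma> N' \<phi>"
proof -
  obtain D :: nat and W c A where \<phi>: "\<And>v. \<phi> v = (\<Sum>h<D. A h * \<sigma> ((\<Sum>i<N. W h i * v i) + c h))"
    using assms(1) unfolding one_layer_net_def by blast
  have "(\<Sum>i<N'. (if i < N then W h i else 0) * v i) = (\<Sum>i<N. W h i * v i)" for h v
    using assms(2) by (intro sum.mono_neutral_cong_right) auto
  then have repr: "\<phi> v = (\<Sum>h<D. A h * \<sigma> ((\<Sum>i<N'. (if i < N then W h i else 0) * v i) + c h))" for v
    by (simp add: \<phi>)
  then show ?thesis unfolding one_layer_net_def by (intro exI allI) (rule repr)
qed

lemma exp_sum_approx_by_net: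
  assumes exp: "net_approximable \<sigma> exp" and "compact K" and F: "\<And>i. continuous_on K (F i)"
    and "0 < e"
  shows "\<exists>\<phi>. one_layer_net \<sigma> N \<phi> \<and> (\<forall>x\<in>K. \<bar>exp_sum F N ts x - \<phi> (\<lambda>i. F i x)\<bar> < e)"
  using \<open>0 < e\<close>
proof (induction ts arbitrary: e)
  case Nil
  then show ?case using one_layer_net_zero[of \<sigma> N] by (intro exI[of _ "\<lambda>v. 0"]) (simp add: exp_sum_def)
next
  case (Cons t ts)
  obtain c a where t: "t = (c, a)" by fastforce
  from Cons.prems have "0 < e/2" by simp
  then obtain \<phi> where \<phi>: "one_layer_net \<sigma> N \<phi>" "\<And>x. x \<in> K \<Longrightarrow> \<bar>exp_sum F N ts x - \<phi> (\<lambda>i. F i x)\<bar> < e/2"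
    using Cons.IH by blast
  have "bounded ((\<lambda>x. \<Sum>i<N. a i * F i x) ` K)"
    by (intro compact_imp_bounded compact_continuous_image continuous_intros F \<open>compact K\<close>)
  then obtain R where R: "\<And>x. x \<in> K \<Longrightarrow> \<bar>\<Sum>i<N. a i * F i x\<bar> \<le> R"
    by (auto simp: bounded_iff)
  obtain \<psi> where \<psi>: "shallow_net \<sigma> \<psi>" "\<And>s. \<bar>s\<bar> \<le> R \<Longrightarrow> \<bar>c * exp s - \<psi> s\<bar> < e/2"
    by (rule net_approximableE[OF net_approximable_cmult[OF exp] \<open>0 < e/2\<close>]) blast
  have head: "\<bar>c * exp (\<Sum>i<N. a i * F i x) - \<psi> (\<Sum>i<N. a i * F i x)\<bar> < e/2" if "x \<in> K" for x
    using \<psi>(2) R[OF that] by blast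
  have "\<bar>exp_sum F N (t # ts) x - (\<psi> (\<Sum>i<N. a i * F i x) + \<phi> (\<lambda>i. F i x))\<bar> < e" if "x \<in> K" for x
  proof -
    have "exp_sum F N (t # ts) x = c * exp (\<Sum>i<N. a i * F i x) + exp_sum F N ts x"
      by (simp add: t exp_sum_def)
    then show ?thesis using head[OF that] \<phi>(2)[OF that] by linarith
  qed
  moreover have "one_layer_net \<sigma> N (\<lambda>v. \<psi> (\<Sum>i<N. a i * v i) + \<phi> v)"
    by (intro one_layer_net_add one_layer_net_ridge \<psi>(1) \<phi>(1))
  ultimately show ?case by (intro exI[of _ "\<lambda>v. \<psi> (\<Sum>i<N. a i * v i) + \<phi> v"]) simp
qed

lemma one_layer_net_approx:
  fixes F :: "nat \<Rightarrow> 'a::t2_space \<Rightarrow> real"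
  assumes \<sigma>: "continuous_on UNIV \<sigma>" "\<not> polynomial_fun \<sigma>"
    and "compact K" and F: "\<And>i. continuous_on K (F i)"
    and separating: "separates_points K F"
    and "continuous_on K f" and "0 < e"
  obtains N \<phi> where "one_layer_net \<sigma> N \<phi>" and "\<And>x. x \<in> K \<Longrightarrow> \<bar>f x - \<phi> (\<lambda>i. F i x)\<bar> < e"
proof -
  have "0 < e/2" using \<open>0 < e\<close> by simp
  obtain N ts where ts: "\<And>x. x \<in> K \<Longrightarrow> \<bar>f x - exp_sum F N ts x\<bar> < e/2"
    by (rule exp_sum_dense[OF \<open>compact K\<close> F separating \<open>continuous_on K f\<close> \<open>0 < e/2\<close>]) (rule that)
  from exp_sum_approx_by_net[where F=F and N=N and ts=ts, OF net_approximable_exp[OF \<sigma>] \<open>compact K\<close> F \<open>0 < e/2\<close>]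
  obtain \<phi> where net: "one_layer_net \<sigma> N \<phi>" and \<phi>: "\<forall>x\<in>K. \<bar>exp_sum F N ts x - \<phi> (\<lambda>i. F i x)\<bar> < e/2"
    by blast
  have "\<bar>f x - \<phi> (\<lambda>i. F i x)\<bar> < e" if "x \<in> K" for x
    using ts[OF that] bspec[OF \<phi> that] by linarith
  with net show ?thesis by (rule that)
qed

lemma one_layer_nets_common_hidden:
  fixes \<phi> :: "'n::finite \<Rightarrow> (nat \<Rightarrow> real) \<Rightarrow> real"
  assumes "\<And>j. one_layer_net \<sigma> N (\<phi> j)"
  obtains D :: nat and W c A where "\<And>j v. \<phi> j v = (\<Sum>h<D. A j h * \<sigma> ((\<Sum>i<N. W h i * v i) + c h))"
proof -
  have "\<exists>(D::nat) W c A. \<forall>j\<in>J. \<forall>v. \<phi> j v = (\<Sum>h<D. A j h * \<sigma> ((\<Sum>i<N. W h i * v i) + c h))"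
    if "finite J" for J
    using that
  proof (induction J rule: finite_induct)
    case (insert j0 J)
    then obtain D :: nat and W c A
      where J: "\<And>j v. j \<in> J \<Longrightarrow> \<phi> j v = (\<Sum>h<D. A j h * \<sigma> ((\<Sum>i<N. W h i * v i) + c h))"
      by blast
    obtain D0 :: nat and W0 c0 A0
      where j0: "\<And>v. \<phi> j0 v = (\<Sum>h<D0. A0 h * \<sigma> ((\<Sum>i<N. W0 h i * v i) + c0 h))"
      using assms[of j0] unfolding one_layer_net_def by blast
    let ?join = "\<lambda>f g h. if h < D then f h else g (h - D)"
    define A' where "A' j h = (if j = j0 then ?join (\<lambda>_. 0) A0 h else ?join (A j) (\<lambda>_. 0) h)" for j h
    have repr: "\<phi> j v = (\<Sum>h<D + D0. A' j h * \<sigma> ((\<Sum>i<N. ?join W W0 h i * v i) + ?join c c0 h))"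
      if "j \<in> insert j0 J" for j v
      using that by (cases "j = j0") (simp_all add: sum_lessThan_add j0 J A'_def)
    then show ?case by (intro exI ballI allI) (rule repr)
  qed simp
  from this[OF finite_class.finite_UNIV] obtain D :: nat and W c A
    where "\<forall>j\<in>UNIV. \<forall>v. \<phi> j v = (\<Sum>h<D. A j h * \<sigma> ((\<Sum>i<N. W h i * v i) + c h))"
    by blast
  then show ?thesis by (intro that) simp
qed

lemma is_mlp_one_layer_nets:
  fixes \<Phi> :: "'n::finite \<Rightarrow> (nat \<Rightarrow> real) \<Rightarrow> real"
  assumes "\<And>j. one_layer_net \<sigma> N (\<Phi> j)"
  shows "is_mlp \<sigma> (\<lambda>v. \<chi> j. \<Phi> j v)"
proof -
  obtain D :: nat and W c A where \<Phi>: "\<And>j v. \<Phi> j v = (\<Sum>h<D. A j h * \<sigma> ((\<Sum>i<N. W h i * v i) + c h))"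
    by (rule one_layer_nets_common_hidden[where \<phi>=\<Phi>, OF assms]) blast
  show ?thesis unfolding is_mlp_def
    by (intro exI[of _ "[(N, W, c)]"] exI[of _ D] exI[of _ A] exI[of _ 0]) (simp add: \<Phi>)
qed

definition depends_on_first :: "nat \<Rightarrow> ((nat \<Rightarrow> real) \<Rightarrow> 'b) \<Rightarrow> bool" where
  "depends_on_first N g \<longleftrightarrow> (\<forall>v v'. (\<forall>i<N. v i = v' i) \<longrightarrow> g v = g v')"

lemma one_layer_net_depends_on_first: "one_layer_net \<sigma> N \<phi> \<Longrightarrow> depends_on_first N \<phi>"
  unfolding one_layer_net_def depends_on_first_def by auto

lemma mlp_approx:
  fixes F :: "nat \<Rightarrow> 'a::t2_space \<Rightarrow> real" and f :: "'a \<Rightarrow> real^'n"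
  assumes \<sigma>: "continuous_on UNIV \<sigma>" "\<not> polynomial_fun \<sigma>"
    and K: "compact K" and F: "\<And>i. continuous_on K (F i)"
    and separating: "separates_points K F"
    and f: "continuous_on K f" and "0 < e"
  obtains N g where "is_mlp \<sigma> g" and "depends_on_first N g"
    and "\<And>x. x \<in> K \<Longrightarrow> norm (f x - g (\<lambda>i. F i x)) < e"
proof -
  define e' where "e' = e / CARD('n)"
  have "0 < e'" using \<open>0 < e\<close> by (simp add: e'_def)
  have "\<exists>N \<phi>. one_layer_net \<sigma> N \<phi> \<and> (\<forall>x\<in>K. \<bar>f x $ j - \<phi> (\<lambda>i. F i x)\<bar> < e')" for j
  proof -
    obtain N \<phi> where "one_layer_net \<sigma> N \<phi>" "\<And>x. x \<in> K \<Longrightarrow> \<bar>f x $ j - \<phi> (\<lambda>i. F i x)\<bar> < e'"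
      by (rule one_layer_net_approx[where F=F, OF \<sigma> K F separating continuous_on_component[OF f, of j] \<open>0 < e'\<close>]) (rule that)
    then show ?thesis by blast
  qed
  then obtain Ns \<Phi> where \<Phi>: "\<And>j. one_layer_net \<sigma> (Ns j) (\<Phi> j)"
    and approx: "\<And>j x. x \<in> K \<Longrightarrow> \<bar>f x $ j - \<Phi> j (\<lambda>i. F i x)\<bar> < e'"
    by metis
  define N where "N = (\<Sum>j\<in>UNIV. Ns j)"
  have \<Phi>_N: "one_layer_net \<sigma> N (\<Phi> j)" for j
  proof (rule one_layer_net_mono[OF \<Phi>])
    show "Ns j \<le> N" unfolding N_def by (rule member_le_sum) auto
  qed
  define g where "g v = (\<chi> j. \<Phi> j v)" for v
  have "is_mlp \<sigma> g"
    unfolding g_def[abs_def] by (rule is_mlp_one_layer_nets[where \<Phi>=\<Phi>, OF \<Phi>_N])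
  moreover have "depends_on_first N g"
    unfolding depends_on_first_def
  proof (intro allI impI)
    fix v v' :: "nat \<Rightarrow> real" assume "\<forall>i<N. v i = v' i"
    then have "\<Phi> j v = \<Phi> j v'" for j
      using one_layer_net_depends_on_first[OF \<Phi>_N] unfolding depends_on_first_def by blast
    then show "g v = g v'" by (simp add: g_def)
  qed
  moreover have "norm (f x - g (\<lambda>i. F i x)) < e" if "x \<in> K" for x
  proof -
    have "norm (f x - g (\<lambda>i. F i x)) \<le> (\<Sum>j\<in>UNIV. \<bar>f x $ j - \<Phi> j (\<lambda>i. F i x)\<bar>)"
      using norm_le_l1_cart[of "f x - g (\<lambda>i. F i x)"] by (simp add: g_def)
    also have "\<dots> < (\<Sum>j\<in>(UNIV :: 'n set). e')"
      using approx[OF that] by (intro sum_strict_mono) auto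
    also have "\<dots> = e" by (simp add: e'_def)
    finally show ?thesis .
  qed
  ultimately show ?thesis by (rule that)
qed

section \<open>Features of bounded input histories\<close>

lemma bounded_seqs_shift: "x \<in> bounded_seqs M \<Longrightarrow> shift_seq k x \<in> bounded_seqs M"
  unfolding bounded_seqs_def shift_seq_def by auto

lemma bounded_seqs_component: "x \<in> bounded_seqs M \<Longrightarrow> \<bar>x l $ j\<bar> \<le> M"
  unfolding bounded_seqs_def using component_le_norm_cart order_trans by blast

lemma compact_bounded_seqs: "compact (bounded_seqs M :: (nat \<Rightarrow> 'a::{real_normed_vector,heine_borel}) set)"
proof -
  have "bounded_seqs M = PiE UNIV (\<lambda>_. cball (0::'a) M)"
    unfolding bounded_seqs_def by (auto simp: PiE_def extensional_def)
  moreover have "compactin (product_topology (\<lambda>_. euclidean) UNIV) (PiE UNIV (\<lambda>_. cball (0::'a) M))"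
    by (subst compactin_PiE) simp
  ultimately show ?thesis by (simp add: euclidean_product_topology)
qed

lemma summable_bounded_powser:
  fixes d :: "nat \<Rightarrow> real"
  assumes "\<And>l. \<bar>d l\<bar> \<le> B" and "\<bar>q\<bar> < 1"
  shows "summable (\<lambda>l. d l * q ^ l)"
proof (rule summable_comparison_test)
  show "\<exists>N. \<forall>l\<ge>N. norm (d l * q ^ l) \<le> B * \<bar>q\<bar> ^ l"
    using assms(1) by (auto simp: abs_mult power_abs intro!: mult_right_mono)
  show "summable (\<lambda>l. B * \<bar>q\<bar> ^ l)" using assms(2) by (intro summable_mult summable_geometric) simp
qed

lemma abs_suminf_bounded_powser_le:
  fixes d :: "nat \<Rightarrow> real"
  assumes "\<And>l. \<bar>d l\<bar> \<le> B" and "\<bar>q\<bar> < 1"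
  shows "\<bar>\<Sum>l. d l * q ^ l\<bar> \<le> B / (1 - \<bar>q\<bar>)"
proof -
  have "summable (\<lambda>l. \<bar>q\<bar> ^ l)" using assms(2) by (intro summable_geometric) simp
  then have "norm (\<Sum>l. d l * q ^ l) \<le> (\<Sum>l. B * \<bar>q\<bar> ^ l)"
    using assms(1) by (intro norm_suminf_le summable_mult) (auto simp: abs_mult power_abs intro!: mult_right_mono)
  also have "\<dots> = B / (1 - \<bar>q\<bar>)"
    using assms(2) by (simp add: suminf_mult[OF \<open>summable (\<lambda>l. \<bar>q\<bar> ^ l)\<close>] suminf_geometric divide_inverse)
  finally show ?thesis by simp
qed

lemma bounded_powser_eventually_nonzero:
  fixes d :: "nat \<Rightarrow> real"
  assumes bounded: "\<And>l. \<bar>d l\<bar> \<le> B" and "d k \<noteq> 0"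
  shows "\<forall>\<^sub>F q in at 0. (\<Sum>l. d l * q ^ l) \<noteq> 0"
proof -
  define k0 where "k0 = (LEAST k. d k \<noteq> 0)"
  have "d k0 \<noteq> 0" using LeastI[of "\<lambda>k. d k \<noteq> 0"] \<open>d k \<noteq> 0\<close> by (auto simp: k0_def)
  have below: "d l = 0" if "l < k0" for l using not_less_Least[OF that[unfolded k0_def]] by blast
  define g where "g q = (\<Sum>l. d (l + k0) * q ^ l)" for q :: real
  have "(g \<longlongrightarrow> d (0 + k0)) (at 0)"
    unfolding g_def using bounded
    by (intro powser_limit_0[of 1] summable_sums summable_bounded_powser[where B=B]) auto
  then have nonzero: "\<forall>\<^sub>F q in at 0. g q \<noteq> 0" using \<open>d k0 \<noteq> 0\<close> by (simp add: tendsto_imp_eventually_ne)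
  have near: "\<forall>\<^sub>F q in at 0. q \<noteq> 0 \<and> \<bar>q\<bar> < (1::real)"
    unfolding eventually_at by (intro exI[of _ 1]) (auto simp: dist_real_def)
  have shift: "(\<Sum>l. d l * q ^ l) = q ^ k0 * g q" if "\<bar>q\<bar> < 1" for q
  proof -
    have "summable (\<lambda>l. d l * q ^ l)" "summable (\<lambda>l. d (l + k0) * q ^ l)"
      using bounded that by (intro summable_bounded_powser[where B=B]; simp)+
    then have "(\<Sum>l. d l * q ^ l) = (\<Sum>l. q ^ k0 * (d (l + k0) * q ^ l))"
      using below by (simp add: suminf_split_initial_segment[of _ k0] power_add ac_simps)
    then show ?thesis unfolding g_def using suminf_mult[OF \<open>summable (\<lambda>l. d (l + k0) * q ^ l)\<close>] by simp
  qed
  from nonzero near show ?thesis by eventually_elim (simp add: shift)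
qed

text \<open>Neuron \<open>prod_encode (n, j)\<close> reads input coordinate \<open>j\<close> with decay rate \<open>1 / (n + 2)\<close>. The rates
  accumulate at \<open>0\<close>, which is what makes the features separate input histories.\<close>

definition feature_rate :: "nat \<Rightarrow> real" where
  "feature_rate i = inverse (real (fst (prod_decode i)) + 2)"

definition feature_coord :: "nat \<Rightarrow> 'm::finite" where
  "feature_coord i = from_nat (snd (prod_decode i))"

definition esn_feature :: "nat \<Rightarrow> (nat \<Rightarrow> real^'m::finite) \<Rightarrow> real" where
  "esn_feature i x = (\<Sum>l. x l $ feature_coord i * feature_rate i ^ l)"

lemma feature_rate_pos: "0 < feature_rate i"
  by (simp add: feature_rate_def)

lemma feature_rate_le_half: "feature_rate i \<le> 1/2"
  by (simp add: feature_rate_def field_simps)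

lemma feature_rate_prod_encode:
  "feature_rate (prod_encode (n, to_nat (j::'m::finite))) = inverse (real n + 2)"
  "feature_coord (prod_encode (n, to_nat j)) = j"
  by (simp_all add: feature_rate_def feature_coord_def)

lemma summable_esn_feature:
  "x \<in> bounded_seqs M \<Longrightarrow> summable (\<lambda>l. x l $ j * feature_rate i ^ l)"
  using feature_rate_pos[of i] feature_rate_le_half[of i]
  by (intro summable_bounded_powser[where B=M] bounded_seqs_component) auto

lemma abs_esn_feature_le:
  assumes "x \<in> bounded_seqs M" shows "\<bar>esn_feature i x\<bar> \<le> 2 * M"
proof -
  have r: "0 < feature_rate i" "feature_rate i \<le> 1/2" by (rule feature_rate_pos feature_rate_le_half)+
  have "0 \<le> M" using bounded_seqs_component[OF assms, of 0 "feature_coord i"] by linarith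
  have "\<bar>esn_feature i x\<bar> \<le> M / (1 - \<bar>feature_rate i\<bar>)"
    unfolding esn_feature_def using r by (intro abs_suminf_bounded_powser_le bounded_seqs_component[OF assms]) auto
  also have "\<dots> \<le> M / (1/2)" using r \<open>0 \<le> M\<close> by (intro divide_left_mono) auto
  finally show ?thesis by simp
qed

lemma esn_feature_shift:
  assumes "x \<in> bounded_seqs M"
  shows "esn_feature i (shift_seq k x)
    = x k $ feature_coord i + feature_rate i * esn_feature i (shift_seq (Suc k) x)"
  using powser_split_head(1)[OF summable_esn_feature[OF bounded_seqs_shift[OF assms]]]
  by (simp add: esn_feature_def shift_seq_def mult.commute)

lemma continuous_on_esn_feature:
  "continuous_on (bounded_seqs M) (esn_feature i :: (nat \<Rightarrow> real^'m::finite) \<Rightarrow> real)"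
proof (rule uniform_limit_theorem)
  have bound: "norm (x l $ feature_coord i * feature_rate i ^ l) \<le> M * (1/2) ^ l" if "x \<in> bounded_seqs M" for x l
  proof -
    have "0 \<le> M" using bounded_seqs_component[OF that, of l "feature_coord i"] by linarith
    then show ?thesis using feature_rate_pos[of i] feature_rate_le_half[of i] bounded_seqs_component[OF that]
      by (auto simp: abs_mult intro!: mult_mono power_mono)
  qed
  show "uniform_limit (bounded_seqs M) (\<lambda>n x. \<Sum>l<n. (x l :: real^'m) $ feature_coord i * feature_rate i ^ l)
      (esn_feature i) sequentially"
    unfolding esn_feature_def[abs_def]
    by (rule Weierstrass_m_test[OF bound]) (auto intro!: summable_mult summable_geometric)
  have coord: "continuous_on UNIV (\<lambda>x::nat \<Rightarrow> real^'m. x l $ j)" for l j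
    by (intro continuous_intros continuous_on_product_coordinates)
  show "\<forall>\<^sub>F n in sequentially. continuous_on (bounded_seqs M)
      (\<lambda>x::nat \<Rightarrow> real^'m. \<Sum>l<n. x l $ feature_coord i * feature_rate i ^ l)"
    by (intro always_eventually allI continuous_intros continuous_on_subset[OF coord]) auto
qed auto

lemma separates_points_esn_feature:
  "separates_points (bounded_seqs M) (esn_feature :: nat \<Rightarrow> (nat \<Rightarrow> real^'m::finite) \<Rightarrow> real)"
  unfolding separates_points_def
proof (intro ballI impI)
  fix x y :: "nat \<Rightarrow> real^'m" assume x: "x \<in> bounded_seqs M" and y: "y \<in> bounded_seqs M" and "x \<noteq> y"
  then obtain l j where "x l $ j \<noteq> y l $ j" by (metis ext vec_eq_iff)
  define d where "d l = x l $ j - y l $ j" for l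
  have "\<bar>d l\<bar> \<le> 2 * M" for l
    using bounded_seqs_component[OF x, of l j] bounded_seqs_component[OF y, of l j] by (simp add: d_def)
  then have "\<forall>\<^sub>F q in at 0. (\<Sum>l. d l * q ^ l) \<noteq> 0"
    using \<open>x l $ j \<noteq> y l $ j\<close> by (intro bounded_powser_eventually_nonzero[of d "2 * M" l]) (auto simp: d_def)
  moreover have "filterlim (\<lambda>n. inverse (real n + 2)) (at 0) sequentially"
  proof (rule filterlim_atI)
    show "(\<lambda>n. inverse (real n + 2)) \<longlonglongrightarrow> 0"
      using LIMSEQ_Suc[OF LIMSEQ_inverse_real_of_nat] by (simp add: add.commute)
  qed simp
  ultimately have "\<forall>\<^sub>F n in sequentially. (\<Sum>l. d l * inverse (real n + 2) ^ l) \<noteq> 0"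
    by (rule eventually_compose_filterlim)
  then obtain n where n: "(\<Sum>l. d l * inverse (real n + 2) ^ l) \<noteq> 0"
    by (auto simp: eventually_sequentially)
  define i where "i = prod_encode (n, to_nat j)"
  have "esn_feature i x - esn_feature i y = (\<Sum>l. d l * inverse (real n + 2) ^ l)"
    unfolding esn_feature_def d_def
    using suminf_diff[OF summable_esn_feature[OF x, where j=j and i=i] summable_esn_feature[OF y, where j=j and i=i]]
    by (simp add: i_def feature_rate_prod_encode left_diff_distrib)
  with n show "\<exists>i. esn_feature i x \<noteq> esn_feature i y" by (intro exI[of _ i]) auto
qed

section \<open>Fading memory and time invariance\<close>

lemma wnorm_le: "(\<And>k. w k * norm (v k) \<le> B) \<Longrightarrow> wnorm w v \<le> ereal B"
  unfolding wnorm_def by (rule SUP_least) simp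

lemma wnorm_ge: "ereal (w k * norm (v k)) \<le> wnorm w v"
  unfolding wnorm_def by (rule SUP_upper) simp

lemma wnorm_diff_eventually_less:
  fixes xs :: "nat \<Rightarrow> nat \<Rightarrow> 'a::real_normed_vector"
  assumes w: "weighting_seq w" and xs: "\<And>n. xs n \<in> bounded_seqs M" and a: "a \<in> bounded_seqs M"
    and "xs \<longlonglongrightarrow> a" and "0 < d"
  shows "\<forall>\<^sub>F n in sequentially. wnorm w (\<lambda>k. a k - xs n k) < ereal d"
proof -
  have w_bounds: "0 < w k" "w k \<le> 1" for k using w by (auto simp: weighting_seq_def)
  have norm_a: "norm (a k) \<le> M" and norm_xs: "norm (xs n k) \<le> M" for n k
    using a xs by (auto simp: bounded_seqs_def)
  then have "0 \<le> M" using norm_ge_zero order_trans by blast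
  have "w \<longlonglongrightarrow> 0" using w by (simp add: weighting_seq_def)
  moreover have "0 < d / (4 * M + 1)" using \<open>0 < d\<close> \<open>0 \<le> M\<close> by simp
  ultimately have "\<forall>\<^sub>F k in sequentially. w k < d / (4 * M + 1)" by (rule order_tendstoD(2))
  then obtain T where T: "\<And>k. k \<ge> T \<Longrightarrow> w k < d / (4 * M + 1)"
    by (auto simp: eventually_sequentially)
  have "isCont (\<lambda>x. x k) a" for k
    using continuous_on_product_coordinates[of k] continuous_on_eq_continuous_at[OF open_UNIV] by blast
  then have "(\<lambda>n. xs n k) \<longlonglongrightarrow> a k" for k
    using \<open>xs \<longlonglongrightarrow> a\<close> by (rule isCont_tendsto_compose)
  then have "\<forall>\<^sub>F n in sequentially. \<forall>k\<in>{..<T}. dist (xs n k) (a k) < d/2"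
    using \<open>0 < d\<close> by (intro eventually_ball_finite ballI tendstoD) auto
  then show ?thesis
  proof eventually_elim
    case (elim n)
    have "w k * norm (a k - xs n k) \<le> d/2" for k
    proof (cases "k < T")
      case True
      then have "norm (a k - xs n k) < d/2" using elim by (simp add: dist_norm norm_minus_commute)
      then show ?thesis using w_bounds[of k] mult_right_mono[of "w k" 1 "norm (a k - xs n k)"] by simp
    next
      case False
      have "norm (a k - xs n k) \<le> 2 * M"
        using norm_triangle_ineq4[of "a k" "xs n k"] norm_a[of k] norm_xs[of n k] by linarith
      then have "w k * norm (a k - xs n k) \<le> d / (4 * M + 1) * (2 * M)"
        using T[of k] False w_bounds[of k] by (intro mult_mono) auto
      also have "\<dots> \<le> d/2" using \<open>0 < d\<close> \<open>0 \<le> M\<close> by (simp add: field_simps)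
      finally show ?thesis .
    qed
    then have "wnorm w (\<lambda>k. a k - xs n k) \<le> ereal (d/2)" by (rule wnorm_le)
    also have "\<dots> < ereal d" using \<open>0 < d\<close> by simp
    finally show ?case .
  qed
qed

lemma fading_memory_continuous_on:
  fixes U :: "(nat \<Rightarrow> 'a::real_normed_vector) \<Rightarrow> nat \<Rightarrow> 'b::real_normed_vector"
  assumes "fading_memory M U"
  shows "continuous_on (bounded_seqs M) (\<lambda>x. U x 0)"
  unfolding continuous_on_sequentially
proof (intro allI ballI impI)
  obtain w where w: "weighting_seq w" and fm: "\<And>x1 e. x1 \<in> bounded_seqs M \<Longrightarrow> e > 0 \<Longrightarrow> \<exists>d>0.
      \<forall>x2\<in>bounded_seqs M. wnorm w (\<lambda>k. x1 k - x2 k) < ereal d \<longrightarrow> wnorm w (\<lambda>k. U x1 k - U x2 k) < ereal e"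
    using assms unfolding fading_memory_def by blast
  have "0 < w 0" using w by (simp add: weighting_seq_def)
  fix xs :: "nat \<Rightarrow> nat \<Rightarrow> 'a" and a assume a: "a \<in> bounded_seqs M" and xs: "(\<forall>n. xs n \<in> bounded_seqs M) \<and> xs \<longlonglongrightarrow> a"
  show "((\<lambda>x. U x 0) \<circ> xs) \<longlonglongrightarrow> U a 0"
  proof (rule tendstoI)
    fix r :: real assume "0 < r"
    then obtain d where "0 < d" and d: "\<And>x2. x2 \<in> bounded_seqs M \<Longrightarrow> wnorm w (\<lambda>k. a k - x2 k) < ereal d
        \<Longrightarrow> wnorm w (\<lambda>k. U a k - U x2 k) < ereal (r * w 0)"
      using fm[OF a, of "r * w 0"] \<open>0 < w 0\<close> by auto
    have "\<forall>\<^sub>F n in sequentially. wnorm w (\<lambda>k. a k - xs n k) < ereal d"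
      using xs by (intro wnorm_diff_eventually_less[OF w _ a _ \<open>0 < d\<close>]) auto
    then show "\<forall>\<^sub>F n in sequentially. dist (((\<lambda>x. U x 0) \<circ> xs) n) (U a 0) < r"
    proof eventually_elim
      case (elim n)
      have "xs n \<in> bounded_seqs M" using xs by blast
      then have "wnorm w (\<lambda>k. U a k - U (xs n) k) < ereal (r * w 0)" by (rule d[OF _ elim])
      with wnorm_ge have "ereal (w 0 * norm (U a 0 - U (xs n) 0)) < ereal (r * w 0)"
        by (rule order.strict_trans1)
      then show ?case using \<open>0 < w 0\<close> by (simp add: dist_norm norm_minus_commute mult.commute)
    qed
  qed
qed

text \<open>On \<open>\<int>\<^sub>-\<close> time invariance alone already makes the output at time \<open>-k\<close> a function of
  the past \<open>shift_seq k x\<close>.\<close>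
lemma time_invariant_filter_eval:
  assumes "time_invariant_filter M U" and "x \<in> bounded_seqs M"
  shows "U x k = U (shift_seq k x) 0"
proof (cases "k = 0")
  case False
  then have "U (shift_seq k x) = shift_seq k (U x)"
    using assms unfolding time_invariant_filter_def by auto
  then show ?thesis by (simp add: shift_seq_def)
qed (simp add: shift_seq_def)

section \<open>A ParalESN whose states are the features\<close>

lemma cmod_le_cnorm2: "i < N \<Longrightarrow> cmod (h i) \<le> cnorm2 N h"
proof -
  assume "i < N"
  then have "(cmod (h i))\<^sup>2 \<le> (\<Sum>l<N. (cmod (h l))\<^sup>2)" by (intro member_le_sum) auto
  then have "sqrt ((cmod (h i))\<^sup>2) \<le> cnorm2 N h" unfolding cnorm2_def by (rule real_sqrt_le_mono)
  then show ?thesis by simp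
qed

lemma esn_solution_unique:
  assumes contractive: "\<forall>i<N. cmod (lam i) < 1"
    and h1: "esn_solution N lam Win b tau x h1" and h2: "esn_solution N lam Win b tau x h2"
  shows "h1 = h2"
proof (intro ext)
  fix k i
  obtain B1 B2 where B1: "\<And>k. cnorm2 N (h1 k) \<le> B1" and B2: "\<And>k. cnorm2 N (h2 k) \<le> B2"
    using h1 h2 unfolding esn_solution_def by blast
  have rec1: "h1 k i = (if i < N then lam i * h1 (Suc k) i else 0) + esn_drive N Win b tau (x k) i"
    and rec2: "h2 k i = (if i < N then lam i * h2 (Suc k) i else 0) + esn_drive N Win b tau (x k) i"
    for k i using h1 h2 unfolding esn_solution_def by blast+
  show "h1 k i = h2 k i"
  proof (cases "i < N")
    case False
    then show ?thesis using rec1[of k i] rec2[of k i] by simp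
  next
    case True
    define \<delta> where "\<delta> n = h1 (k + n) i - h2 (k + n) i" for n
    have \<delta>0: "\<delta> 0 = lam i ^ n * \<delta> n" for n
    proof (induction n)
      case (Suc n)
      have "\<delta> n = lam i * \<delta> (Suc n)"
        unfolding \<delta>_def using rec1[of "k + n" i] rec2[of "k + n" i] True by (simp add: right_diff_distrib)
      then show ?case using Suc by simp
    qed simp
    have "cmod (\<delta> n) \<le> B1 + B2" for n
      using norm_triangle_ineq4[of "h1 (k + n) i" "h2 (k + n) i"] cmod_le_cnorm2[OF True, of "h1 (k + n)"]
        cmod_le_cnorm2[OF True, of "h2 (k + n)"] B1[of "k + n"] B2[of "k + n"]
      unfolding \<delta>_def by linarith
    then have "cmod (\<delta> 0) \<le> cmod (lam i) ^ n * (B1 + B2)" for n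
      unfolding \<delta>0[of n] norm_mult norm_power by (intro mult_left_mono) auto
    moreover have "(\<lambda>n. cmod (lam i) ^ n * (B1 + B2)) \<longlonglongrightarrow> 0"
      using contractive True by (intro tendsto_mult_left_zero LIMSEQ_power_zero) auto
    ultimately have "cmod (\<delta> 0) \<le> 0" by (intro LIMSEQ_le_const) auto
    then show ?thesis by (simp add: \<delta>_def)
  qed
qed

lemma esn_states_eqI:
  assumes "\<forall>i<N. cmod (lam i) < 1" and "esn_solution N lam Win b tau x h"
  shows "esn_states N lam Win b tau x = h"
  unfolding esn_states_def
proof (rule the_equality)
  show "h' = h" if "esn_solution N lam Win b tau x h'" for h'
    using esn_solution_unique[OF assms(1) that assms(2)] .
qed fact

lemma echo_state_property_if_contractive:
  fixes Win :: "nat \<Rightarrow> 'm::finite \<Rightarrow> complex"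
  assumes "\<forall>i<N. cmod (lam i) < 1"
  shows "echo_state_property N lam Win b tau"
  unfolding echo_state_property_def
proof (intro allI)
  fix x :: "nat \<Rightarrow> real^'m" and h0 h0' :: "nat \<Rightarrow> complex"
  let ?traj = "esn_traj N lam Win b tau x"
  have diff: "?traj h0 t i - ?traj h0' t i = lam i ^ t * (h0 i - h0' i)" if "i < N" for t i
  proof (induction t)
    case (Suc t)
    have "?traj h0 (Suc t) i - ?traj h0' (Suc t) i = lam i * (?traj h0 t i - ?traj h0' t i)"
      using that by (simp add: right_diff_distrib)
    then show ?case using Suc by simp
  qed simp
  have "(\<lambda>t. cmod (?traj h0 t i - ?traj h0' t i)) \<longlonglongrightarrow> 0" if "i < N" for i
    unfolding diff[OF that] norm_mult norm_power
    using assms that by (intro tendsto_mult_left_zero LIMSEQ_power_zero) auto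
  then have "(\<lambda>t. sqrt (\<Sum>i<N. (cmod (?traj h0 t i - ?traj h0' t i))\<^sup>2)) \<longlonglongrightarrow> sqrt (\<Sum>i<N. 0\<^sup>2)"
    by (intro tendsto_real_sqrt tendsto_sum tendsto_power) auto
  then show "(\<lambda>t. cnorm2 N (\<lambda>i. ?traj h0 t i - ?traj h0' t i)) \<longlonglongrightarrow> 0"
    by (simp add: cnorm2_def)
qed

definition esn_lam :: "nat \<Rightarrow> complex" where
  "esn_lam i = complex_of_real (feature_rate i)"

definition esn_Win :: "nat \<Rightarrow> 'm::finite \<Rightarrow> complex" where
  "esn_Win i j = (if j = feature_coord i then 1 else 0)"

definition feature_states :: "nat \<Rightarrow> (nat \<Rightarrow> real^'m::finite) \<Rightarrow> nat \<Rightarrow> nat \<Rightarrow> complex" where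
  "feature_states N x k i = (if i < N then complex_of_real (esn_feature i (shift_seq k x)) else 0)"

lemma cmod_esn_lam_less_1: "cmod (esn_lam i) < 1"
  using feature_rate_pos[of i] feature_rate_le_half[of i] by (simp add: esn_lam_def)

lemma esn_drive_esn_Win:
  "esn_drive N esn_Win (\<lambda>_. 0) 1 u i = (if i < N then complex_of_real (u $ feature_coord i) else 0)"
proof -
  have "esn_Win i j * complex_of_real (u $ j) = (if j = feature_coord i then complex_of_real (u $ j) else 0)"
    for j by (simp add: esn_Win_def)
  then have "(\<Sum>j\<in>UNIV. esn_Win i j * complex_of_real (u $ j)) = complex_of_real (u $ feature_coord i)"
    by (simp add: sum.delta)
  then show ?thesis unfolding esn_drive_def by simp
qed

lemma esn_solution_feature_states:
  assumes x: "x \<in> bounded_seqs M"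
  shows "esn_solution N esn_lam esn_Win (\<lambda>_. 0) 1 x (feature_states N x)"
  unfolding esn_solution_def
proof (intro conjI allI)
  fix k i
  show "feature_states N x k i = (if i < N then esn_lam i * feature_states N x (Suc k) i else 0)
      + esn_drive N esn_Win (\<lambda>_. 0) 1 (x k) i"
    unfolding esn_drive_esn_Win feature_states_def esn_lam_def
    by (simp add: esn_feature_shift[OF x, of i k] add.commute)
next
  have "cnorm2 N (feature_states N x k) \<le> sqrt (real N * (2 * M)\<^sup>2)" for k
  proof -
    have "(cmod (feature_states N x k i))\<^sup>2 \<le> (2 * M)\<^sup>2" if "i < N" for i
      using that abs_esn_feature_le[OF bounded_seqs_shift[OF x], of i k]
      by (intro power_mono) (auto simp: feature_states_def)
    then have "(\<Sum>i<N. (cmod (feature_states N x k i))\<^sup>2) \<le> (\<Sum>i<N. (2 * M)\<^sup>2)"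
      by (intro sum_mono) simp
    then show ?thesis unfolding cnorm2_def by (intro real_sqrt_le_mono) simp
  qed
  then show "\<exists>B. \<forall>k. cnorm2 N (feature_states N x k) \<le> B" by blast
qed

lemma paral_filter_esn_features:
  assumes "x \<in> bounded_seqs M" and "depends_on_first N g"
  shows "paral_filter N esn_lam esn_Win (\<lambda>_. 0) 1 g x k = g (\<lambda>i. esn_feature i (shift_seq k x))"
proof -
  have "esn_states N esn_lam esn_Win (\<lambda>_. 0) 1 x = feature_states N x"
    using cmod_esn_lam_less_1 by (intro esn_states_eqI esn_solution_feature_states[OF assms(1)]) auto
  then have "paral_filter N esn_lam esn_Win (\<lambda>_. 0) 1 g x k = g (realify N (feature_states N x k))"
    by (simp add: paral_filter_def)
  also have "\<dots> = g (\<lambda>i. esn_feature i (shift_seq k x))"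
    using \<open>depends_on_first N g\<close> by (simp add: depends_on_first_def realify_def feature_states_def)
  finally show ?thesis .
qed

theorem corollary1:
  fixes U :: "(nat \<Rightarrow> real^'m) \<Rightarrow> (nat \<Rightarrow> real^'n)"
    and M \<epsilon> :: real
    and \<sigma> :: "real \<Rightarrow> real"
  assumes "M > 0"
    and "continuous_on UNIV \<sigma>" and "\<not> polynomial_fun \<sigma>"
    and "causal_filter M U" and "time_invariant_filter M U" and "fading_memory M U"
    and "\<epsilon> > 0"
  shows "\<exists>N (lam :: nat \<Rightarrow> complex) (Win :: nat \<Rightarrow> 'm \<Rightarrow> complex) (b :: nat \<Rightarrow> complex) tau
            (f :: (nat \<Rightarrow> real) \<Rightarrow> real^'n).
           0 < tau \<and> tau \<le> 1 \<and> (\<forall>i<N. cmod (lam i) < 1) \<and>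
           echo_state_property N lam Win b tau \<and> is_mlp \<sigma> f \<and>
           (SUP x\<in>bounded_seqs M. supnorm (\<lambda>k. U x k - paral_filter N lam Win b tau f x k))
             < ereal \<epsilon>"
proof -
  have "0 < \<epsilon>/2" using \<open>\<epsilon> > 0\<close> by simp
  obtain N g where mlp: "is_mlp \<sigma> g" and local: "depends_on_first N g"
    and approx: "\<And>x. x \<in> bounded_seqs M \<Longrightarrow> norm (U x 0 - g (\<lambda>i. esn_feature i x)) < \<epsilon>/2"
    by (rule mlp_approx[OF assms(2,3) compact_bounded_seqs continuous_on_esn_feature
          separates_points_esn_feature fading_memory_continuous_on[OF assms(6)] \<open>0 < \<epsilon>/2\<close>]) (rule that)
  have "norm (U x k - paral_filter N esn_lam esn_Win (\<lambda>_. 0) 1 g x k) < \<epsilon>/2" if "x \<in> bounded_seqs M" for x k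
    using approx[OF bounded_seqs_shift[OF that]]
    unfolding paral_filter_esn_features[OF that local] time_invariant_filter_eval[OF assms(5) that] .
  then have "(SUP x\<in>bounded_seqs M. supnorm (\<lambda>k. U x k - paral_filter N esn_lam esn_Win (\<lambda>_. 0) 1 g x k))
      \<le> ereal (\<epsilon>/2)"
    unfolding supnorm_def by (intro SUP_least) (simp add: less_imp_le)
  also have "\<dots> < ereal \<epsilon>" using \<open>\<epsilon> > 0\<close> by simp
  finally show ?thesis
    using mlp cmod_esn_lam_less_1 echo_state_property_if_contractive[of N esn_lam]
    by (intro exI[of _ N] exI[of _ esn_lam] exI[of _ esn_Win] exI[of _ "\<lambda>_. 0"] exI[of _ 1] exI[of _ g]) auto
qed

end
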